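(* For $t>0$ and $h\ge0$ set \[ f(t,h):=\sup_{h'\ge0}\Big(\psi(h')-\frac{(h-h')^2}{8t}\Big), \] and $f(0,h):=\psi(h)$. Then $f$ is the unique viscosity solution of \[ \partial_t f - 2(\partial_h f)^2 = 0 \ \text{ in } (0,\infty)^2, \qquad -\partial_h f = 0 \ \text{ on } (0,\infty)\times\{0\}, \] that satisfies $f(0,h)=\psi(h)$ for all $h\ge0$ and is globally Lipschitz continuous in the variable $h$.
   Context: Let $P$ be a probability measure on $\mathbb{R}$ with bounded support. Let $\bar x_1$ have law $P$ and $z_1$ be a standard Gaussian independent of $\bar x_1$, and define for $h\ge0$ \[ \psi(h):=\mathbb{E}\log\int_{\mathbb{R}}\exp\Big(\sqrt h\, z_1x+hx\bar x_1-\tfrac h2x^2\Big)\,dP(x). \] Viscosity solutions: $f\in C([0,\infty)^2)$ is a viscosity subsolution if for every $(t,h)\in(0,\infty)\times[0,\infty)$ and $\phi\in C^\infty((0,\infty)\times[0,\infty))$ such that $f-\phi$ has a local maximum at $(t,h)$, we have $(\partial_t\phi-2(\partial_h\phi)^2)(t,h)\le0$ if $h>0$, and $\min(-\partial_h\phi,\partial_t\phi-2(\partial_h\phi)^2)(t,h)\le0$ if $h=0$. It is a viscosity supersolution if for every such $(t,h),\phi$ with $f-\phi$ having a local minimum at $(t,h)$, we have $(\partial_t\phi-2(\partial_h\phi)^2)(t,h)\ge0$ if $h>0$, and $\max(-\partial_h\phi,\partial_t\phi-2(\partial_h\phi)^2)(t,h)\ge0$ if $h=0$. A viscosity solution is both.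 *)

theory Defs
  imports "HOL-Analysis.Analysis" "HOL-Probability.Probability"
begin

definition std_gaussian :: "real measure" where
  "std_gaussian = density lborel std_normal_density"

definition psi :: "real measure \<Rightarrow> real \<Rightarrow> real" where
  "psi P h = (\<integral>w. ln (\<integral>x. exp (sqrt h * snd w * x + h * x * fst w - h / 2 * x\<^sup>2) \<partial>P)
                \<partial>(P \<Otimes>\<^sub>M std_gaussian))"

definition pdt :: "(real \<times> real \<Rightarrow> real) \<Rightarrow> real \<times> real \<Rightarrow> real" where
  "pdt \<phi> = (\<lambda>(t, h). deriv (\<lambda>s. \<phi> (s, h)) t)"

definition pdh :: "(real \<times> real \<Rightarrow> real) \<Rightarrow> real \<times> real \<Rightarrow> real" where
  "pdh \<phi> = (\<lambda>(t, h). deriv (\<lambda>s. \<phi> (t, s)) h)"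

fun iter_pd :: "bool list \<Rightarrow> (real \<times> real \<Rightarrow> real) \<Rightarrow> real \<times> real \<Rightarrow> real" where
  "iter_pd [] \<phi> = \<phi>"
| "iter_pd (b # bs) \<phi> = (if b then pdt else pdh) (iter_pd bs \<phi>)"

definition smooth2 :: "(real \<times> real \<Rightarrow> real) \<Rightarrow> bool" where
  "smooth2 \<phi> \<longleftrightarrow> (\<forall>bs. continuous_on UNIV (iter_pd bs \<phi>) \<and>
      (\<forall>t h. (\<lambda>s. iter_pd bs \<phi> (s, h)) differentiable (at t) \<and>
             (\<lambda>s. iter_pd bs \<phi> (t, s)) differentiable (at h)))"


definition local_max_at :: "(real \<times> real \<Rightarrow> real) \<Rightarrow> real \<times> real \<Rightarrow> bool" where
  "local_max_at g p \<longleftrightarrow> (\<exists>e>0. \<forall>y \<in> {0<..} \<times> {0..}. dist y p < e \<longrightarrow> g y \<le> g p)"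

definition local_min_at :: "(real \<times> real \<Rightarrow> real) \<Rightarrow> real \<times> real \<Rightarrow> bool" where
  "local_min_at g p \<longleftrightarrow> (\<exists>e>0. \<forall>y \<in> {0<..} \<times> {0..}. dist y p < e \<longrightarrow> g y \<ge> g p)"

definition viscosity_subsolution :: "(real \<times> real \<Rightarrow> real) \<Rightarrow> bool" where
  "viscosity_subsolution f \<longleftrightarrow> continuous_on ({0..} \<times> {0..}) f \<and>
     (\<forall>t h \<phi>. t > 0 \<and> h \<ge> 0 \<and> smooth2 \<phi> \<and> local_max_at (\<lambda>y. f y - \<phi> y) (t, h) \<longrightarrow>
        (if h > 0 then pdt \<phi> (t, h) - 2 * (pdh \<phi> (t, h))\<^sup>2 \<le> 0
         else min (- pdh \<phi> (t, h)) (pdt \<phi> (t, h) - 2 * (pdh \<phi> (t, h))\<^sup>2) \<le> 0))"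

definition viscosity_supersolution :: "(real \<times> real \<Rightarrow> real) \<Rightarrow> bool" where
  "viscosity_supersolution f \<longleftrightarrow> continuous_on ({0..} \<times> {0..}) f \<and>
     (\<forall>t h \<phi>. t > 0 \<and> h \<ge> 0 \<and> smooth2 \<phi> \<and> local_min_at (\<lambda>y. f y - \<phi> y) (t, h) \<longrightarrow>
        (if h > 0 then pdt \<phi> (t, h) - 2 * (pdh \<phi> (t, h))\<^sup>2 \<ge> 0
         else max (- pdh \<phi> (t, h)) (pdt \<phi> (t, h) - 2 * (pdh \<phi> (t, h))\<^sup>2) \<ge> 0))"

definition viscosity_solution :: "(real \<times> real \<Rightarrow> real) \<Rightarrow> bool" where
  "viscosity_solution f \<longleftrightarrow> viscosity_subsolution f \<and> viscosity_supersolution f"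

definition lipschitz_in_h :: "(real \<times> real \<Rightarrow> real) \<Rightarrow> bool" where
  "lipschitz_in_h f \<longleftrightarrow> (\<exists>L. \<forall>t\<ge>0. \<forall>h\<ge>0. \<forall>h'\<ge>0. \<bar>f (t, h) - f (t, h')\<bar> \<le> L * \<bar>h - h'\<bar>)"

definition hopf_lax :: "real measure \<Rightarrow> real \<times> real \<Rightarrow> real" where
  "hopf_lax P = (\<lambda>(t, h). if t = 0 then psi P h
       else (SUP h'\<in>{0..}. psi P h' - (h - h')\<^sup>2 / (8 * t)))"

end

theory Submission
  imports Defs "HOL-Probability.Hoeffding"
begin

section \<open>Test functions and jets\<close>

definition quadratic_at :: "real \<Rightarrow> real \<Rightarrow> real \<Rightarrow> real \<Rightarrow> real \<Rightarrow> real \<Rightarrow> real \<Rightarrow> real \<times> real \<Rightarrow> real" where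
  "quadratic_at t0 h0 a b c d e =
     (\<lambda>(t, h). a + b * (t - t0) + c * (h - h0) + d * (t - t0)\<^sup>2 + e * (h - h0)\<^sup>2)"

lemma quadratic_at_has_derivative_t:
  "((\<lambda>s. quadratic_at t0 h0 a b c d e (s, h)) has_real_derivative b + 2 * d * (t - t0)) (at t)"
  unfolding quadratic_at_def by (auto intro!: derivative_eq_intros)

lemma quadratic_at_has_derivative_h:
  "((\<lambda>s. quadratic_at t0 h0 a b c d e (t, s)) has_real_derivative c + 2 * e * (h - h0)) (at h)"
  unfolding quadratic_at_def by (auto intro!: derivative_eq_intros)

lemma pdt_quadratic_at: "pdt (quadratic_at t0 h0 a b c d e) = quadratic_at t0 h0 b (2 * d) 0 0 0"
proof (intro ext, clarify)
  fix t h
  show "pdt (quadratic_at t0 h0 a b c d e) (t, h) = quadratic_at t0 h0 b (2 * d) 0 0 0 (t, h)"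
    using DERIV_imp_deriv[OF quadratic_at_has_derivative_t]
    unfolding pdt_def by (simp add: quadratic_at_def)
qed

lemma pdh_quadratic_at: "pdh (quadratic_at t0 h0 a b c d e) = quadratic_at t0 h0 c 0 (2 * e) 0 0"
proof (intro ext, clarify)
  fix t h
  show "pdh (quadratic_at t0 h0 a b c d e) (t, h) = quadratic_at t0 h0 c 0 (2 * e) 0 0 (t, h)"
    using DERIV_imp_deriv[OF quadratic_at_has_derivative_h]
    unfolding pdh_def by (simp add: quadratic_at_def)
qed

lemma iter_pd_quadratic_at:
  "\<exists>a' b' c' d' e'. iter_pd bs (quadratic_at t0 h0 a b c d e) = quadratic_at t0 h0 a' b' c' d' e'"
proof (induction bs)
  case (Cons x bs)
  then obtain a' b' c' d' e' where "iter_pd bs (quadratic_at t0 h0 a b c d e) = quadratic_at t0 h0 a' b' c' d' e'"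
    by blast
  then show ?case
    by (cases x) (simp_all only: iter_pd.simps if_True if_False pdt_quadratic_at pdh_quadratic_at; blast)+
qed (simp only: iter_pd.simps; blast)

lemma smooth2_quadratic_at: "smooth2 (quadratic_at t0 h0 a b c d e)"
  unfolding smooth2_def
proof (intro allI conjI)
  fix bs t h
  obtain a' b' c' d' e' where eq: "iter_pd bs (quadratic_at t0 h0 a b c d e) = quadratic_at t0 h0 a' b' c' d' e'"
    using iter_pd_quadratic_at by blast
  show "continuous_on UNIV (iter_pd bs (quadratic_at t0 h0 a b c d e))"
    unfolding eq unfolding quadratic_at_def split_def by (intro continuous_intros)
  show "(\<lambda>s. iter_pd bs (quadratic_at t0 h0 a b c d e) (s, h)) differentiable at t"
    unfolding eq using quadratic_at_has_derivative_t real_differentiable_def by blast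
  show "(\<lambda>s. iter_pd bs (quadratic_at t0 h0 a b c d e) (t, s)) differentiable at h"
    unfolding eq using quadratic_at_has_derivative_h real_differentiable_def by blast
qed

lemma smooth2_has_derivative:
  assumes "smooth2 \<phi>"
  shows "(\<phi> has_derivative (\<lambda>(dt, dh). pdt \<phi> (t, h) * dt + pdh \<phi> (t, h) * dh)) (at (t, h))"
proof -
  have diff: "(\<lambda>s. iter_pd [] \<phi> (s, h)) differentiable (at t)"
    "\<And>t h. (\<lambda>s. iter_pd [] \<phi> (t, s)) differentiable (at h)"
    and cont: "continuous_on UNIV (iter_pd [False] \<phi>)"
    using assms unfolding smooth2_def by blast+
  have dt: "((\<lambda>s. \<phi> (s, h)) has_derivative (*) (pdt \<phi> (t, h))) (at t)"
    using diff(1) unfolding pdt_def has_field_derivative_def[symmetric]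
    by (simp add: DERIV_deriv_iff_real_differentiable)
  have dh: "((\<lambda>s. \<phi> (x, s)) has_derivative blinfun_apply (blinfun_mult_right (pdh \<phi> (x, y)))) (at y)"
    for x y
    using diff(2)[of x y] unfolding pdh_def blinfun_mult_right.rep_eq has_field_derivative_def[symmetric]
    by (simp add: DERIV_deriv_iff_real_differentiable)
  have "continuous (at (t, h)) (\<lambda>(x, y). blinfun_mult_right (pdh \<phi> (x, y)))"
    using cont by (auto simp: continuous_on_eq_continuous_at split_beta' intro!: continuous_intros)
  then show ?thesis
    using has_derivative_partialsI[where f="\<lambda>x y. \<phi> (x, y)" and X=UNIV and Y=UNIV, OF dt dh]
    by (simp add: split_beta')
qed

lemma smooth2_has_derivative_t:
  assumes "smooth2 \<phi>"
  shows "((\<lambda>s. \<phi> (s, h)) has_real_derivative pdt \<phi> (t, h)) (at t)"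
proof -
  have "(\<lambda>s. iter_pd [] \<phi> (s, h)) differentiable (at t)"
    using assms unfolding smooth2_def by blast
  then show ?thesis unfolding pdt_def by (simp add: DERIV_deriv_iff_real_differentiable)
qed

lemma smooth2_has_derivative_h:
  assumes "smooth2 \<phi>"
  shows "((\<lambda>s. \<phi> (t, s)) has_real_derivative pdh \<phi> (t, h)) (at h)"
proof -
  have "(\<lambda>s. iter_pd [] \<phi> (t, s)) differentiable (at h)"
    using assms unfolding smooth2_def by blast
  then show ?thesis unfolding pdh_def by (simp add: DERIV_deriv_iff_real_differentiable)
qed

lemma smooth2_directional_quotient:
  assumes "smooth2 \<phi>"
  shows "((\<lambda>\<epsilon>. (\<phi> (t - \<epsilon>, h - \<epsilon> * c) - \<phi> (t, h)) / \<epsilon>)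
           \<longlongrightarrow> - pdt \<phi> (t, h) - c * pdh \<phi> (t, h)) (at_right 0)"
proof -
  have path: "((\<lambda>\<epsilon>. (t - \<epsilon>, h - \<epsilon> * c)) has_derivative (\<lambda>\<epsilon>. (- \<epsilon>, - \<epsilon> * c))) (at 0)"
    by (auto intro!: derivative_eq_intros)
  have "((\<lambda>\<epsilon>. \<phi> (t - \<epsilon>, h - \<epsilon> * c)) has_real_derivative - pdt \<phi> (t, h) - c * pdh \<phi> (t, h)) (at 0)"
    unfolding has_field_derivative_def
    by (rule has_derivative_eq_rhs[OF has_derivative_compose[OF path smooth2_has_derivative[OF assms]]])
      (auto simp: fun_eq_iff algebra_simps)
  then have "((\<lambda>\<epsilon>. (\<phi> (t - \<epsilon>, h - \<epsilon> * c) - \<phi> (t, h)) / \<epsilon>)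
               \<longlongrightarrow> - pdt \<phi> (t, h) - c * pdh \<phi> (t, h)) (at 0)"
    by (simp add: has_field_derivative_iff)
  then show ?thesis by (rule tendsto_mono[OF at_le, rotated]) simp
qed

text \<open>Second-order jets: a quadratic majorant (minorant) touching at a point serves as test function.\<close>

lemma subsolution_upper_jet:
  assumes sub: "viscosity_subsolution u" and "t0 > 0" "h0 \<ge> 0" "e > 0"
    and jet: "\<And>t h. t > 0 \<Longrightarrow> h \<ge> 0 \<Longrightarrow> dist (t, h) (t0, h0) < e \<Longrightarrow>
        u (t, h) - u (t0, h0) \<le> A * (t - t0) + B * (h - h0) + M * ((t - t0)\<^sup>2 + (h - h0)\<^sup>2)"
  shows "if h0 > 0 then A - 2 * B\<^sup>2 \<le> 0 else min (- B) (A - 2 * B\<^sup>2) \<le> 0"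
proof -
  define \<phi> where "\<phi> = quadratic_at t0 h0 (u (t0, h0)) A B M M"
  have pd: "pdt \<phi> (t0, h0) = A" "pdh \<phi> (t0, h0) = B"
    unfolding \<phi>_def pdt_quadratic_at pdh_quadratic_at by (simp_all add: quadratic_at_def)
  have "local_max_at (\<lambda>y. u y - \<phi> y) (t0, h0)"
    unfolding local_max_at_def
  proof (intro exI[of _ e] conjI ballI impI)
    fix y assume "y \<in> {0<..} \<times> {0..}" "dist y (t0, h0) < e"
    then show "u y - \<phi> y \<le> u (t0, h0) - \<phi> (t0, h0)"
      using jet[of "fst y" "snd y"] by (auto simp: \<phi>_def quadratic_at_def algebra_simps)
  qed fact
  then have "if h0 > 0 then pdt \<phi> (t0, h0) - 2 * (pdh \<phi> (t0, h0))\<^sup>2 \<le> 0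
      else min (- pdh \<phi> (t0, h0)) (pdt \<phi> (t0, h0) - 2 * (pdh \<phi> (t0, h0))\<^sup>2) \<le> 0"
    using sub assms(2,3) smooth2_quadratic_at unfolding viscosity_subsolution_def \<phi>_def by blast
  then show ?thesis unfolding pd .
qed

lemma supersolution_lower_jet:
  assumes super: "viscosity_supersolution v" and "t0 > 0" "h0 \<ge> 0" "e > 0"
    and jet: "\<And>t h. t > 0 \<Longrightarrow> h \<ge> 0 \<Longrightarrow> dist (t, h) (t0, h0) < e \<Longrightarrow>
        A * (t - t0) + B * (h - h0) - M * ((t - t0)\<^sup>2 + (h - h0)\<^sup>2) \<le> v (t, h) - v (t0, h0)"
  shows "if h0 > 0 then A - 2 * B\<^sup>2 \<ge> 0 else max (- B) (A - 2 * B\<^sup>2) \<ge> 0"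
proof -
  define \<phi> where "\<phi> = quadratic_at t0 h0 (v (t0, h0)) A B (- M) (- M)"
  have pd: "pdt \<phi> (t0, h0) = A" "pdh \<phi> (t0, h0) = B"
    unfolding \<phi>_def pdt_quadratic_at pdh_quadratic_at by (simp_all add: quadratic_at_def)
  have "local_min_at (\<lambda>y. v y - \<phi> y) (t0, h0)"
    unfolding local_min_at_def
  proof (intro exI[of _ e] conjI ballI impI)
    fix y assume "y \<in> {0<..} \<times> {0..}" "dist y (t0, h0) < e"
    then show "v y - \<phi> y \<ge> v (t0, h0) - \<phi> (t0, h0)"
      using jet[of "fst y" "snd y"] by (auto simp: \<phi>_def quadratic_at_def algebra_simps)
  qed fact
  then have "if h0 > 0 then pdt \<phi> (t0, h0) - 2 * (pdh \<phi> (t0, h0))\<^sup>2 \<ge> 0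
      else max (- pdh \<phi> (t0, h0)) (pdt \<phi> (t0, h0) - 2 * (pdh \<phi> (t0, h0))\<^sup>2) \<ge> 0"
    using super assms(2,3) smooth2_quadratic_at unfolding viscosity_supersolution_def \<phi>_def by blast
  then show ?thesis unfolding pd .
qed

lemma upper_jet_slope_bounds:
  fixes f :: "real \<Rightarrow> real"
  assumes "e > 0" "h0 \<ge> 0"
    and jet: "\<And>h. h \<ge> 0 \<Longrightarrow> \<bar>h - h0\<bar> < e \<Longrightarrow> f h - f h0 \<le> B * (h - h0) + M * (h - h0)\<^sup>2"
    and lip: "\<And>h. h \<ge> 0 \<Longrightarrow> \<bar>f h - f h0\<bar> \<le> L * \<bar>h - h0\<bar>"
  shows "- L \<le> B" and "h0 > 0 \<Longrightarrow> B \<le> L"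
proof -
  have bound: "- L \<le> \<sigma> * B + M * \<epsilon>"
    if "\<sigma> = 1 \<or> \<sigma> = - 1" "0 < \<epsilon>" "\<epsilon> < e" "0 \<le> h0 + \<sigma> * \<epsilon>" for \<sigma> \<epsilon>
  proof -
    have "(- L) * \<epsilon> \<le> (\<sigma> * B + M * \<epsilon>) * \<epsilon>"
      using jet[of "h0 + \<sigma> * \<epsilon>"] lip[of "h0 + \<sigma> * \<epsilon>"] that
      by (auto simp: power2_eq_square algebra_simps abs_le_iff)
    then show ?thesis using \<open>0 < \<epsilon>\<close> by (rule mult_right_le_imp_le)
  qed
  have lim: "((\<lambda>\<epsilon>. \<sigma> * B + M * \<epsilon>) \<longlongrightarrow> \<sigma> * B) (at_right 0)" for \<sigma>
    by (auto intro!: tendsto_eq_intros)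
  have "- L \<le> 1 * B"
  proof (rule tendsto_lowerbound[OF lim])
    show "\<forall>\<^sub>F \<epsilon> in at_right 0. - L \<le> 1 * B + M * \<epsilon>"
      unfolding eventually_at_right_field using bound[of 1] assms by (intro exI[of _ e]) auto
  qed simp
  then show "- L \<le> B" by simp
  assume "h0 > 0"
  have "- L \<le> (- 1) * B"
  proof (rule tendsto_lowerbound[OF lim])
    show "\<forall>\<^sub>F \<epsilon> in at_right 0. - L \<le> (- 1) * B + M * \<epsilon>"
      unfolding eventually_at_right_field using bound[of "- 1"] assms \<open>h0 > 0\<close>
      by (intro exI[of _ "min e h0"]) auto
  qed simp
  then show "B \<le> L" by simp
qed

section \<open>Comparison principle\<close>

lemma continuous_attains_sup_superlevel:
  fixes f :: "'a::topological_space \<Rightarrow> real"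
  assumes "compact K" "continuous_on K f" "x0 \<in> K" "0 \<le> f x0"
    and superlevel: "\<And>x. x \<in> D \<Longrightarrow> 0 \<le> f x \<Longrightarrow> x \<in> K"
  obtains x where "x \<in> K" "\<And>y. y \<in> D \<Longrightarrow> f y \<le> f x" "f x0 \<le> f x"
proof -
  obtain x where x: "x \<in> K" "\<And>y. y \<in> K \<Longrightarrow> f y \<le> f x"
    using continuous_attains_sup[OF assms(1) _ assms(2)] assms(3) by blast
  have "f y \<le> f x" if "y \<in> D" for y
    using x superlevel[OF that] x(2)[OF assms(3)] assms(4) by fastforce
  then show ?thesis using that x assms(3) by blast
qed

lemma quadratic_le_linear_bound:
  fixes \<eta> C L h :: real
  assumes "\<eta> > 0" "C \<ge> 0" "L \<ge> 0" "h \<ge> 0" "\<eta> * h\<^sup>2 \<le> C + L * h"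
  shows "h \<le> 1 + (C + L) / \<eta>"
proof (cases "h \<le> 1")
  case False
  have "C * 1 \<le> C * h"
    using False assms by (intro mult_left_mono) auto
  then have "(\<eta> * h) * h \<le> (C + L) * h"
    using assms(5) by (simp add: power2_eq_square algebra_simps)
  then have "h * \<eta> \<le> C + L"
    using False by (simp add: mult_le_cancel_right mult.commute)
  then have "h \<le> (C + L) / \<eta>"
    using assms(1) by (simp add: pos_le_divide_eq)
  then show ?thesis by simp
qed (use assms in \<open>simp add: add_increasing2\<close>)

lemma linear_minus_quadratic_le:
  fixes \<eta> L k :: real
  assumes "\<eta> > 0"
  shows "L * k - \<eta> * k\<^sup>2 \<le> L\<^sup>2 / (4 * \<eta>)"
proof -
  have "0 \<le> (2 * \<eta> * k - L)\<^sup>2" by simp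
  then have "4 * \<eta> * (L * k - \<eta> * k\<^sup>2) \<le> L\<^sup>2" by (simp add: power2_eq_square algebra_simps)
  then show ?thesis using assms by (simp add: field_simps mult.commute)
qed

text \<open>The Hamiltonian \<open>2 p\<^sup>2\<close> is \<open>4 \<Lambda>\<close>-Lipschitz on \<open>[-\<Lambda>, \<Lambda>]\<close>.\<close>

lemma hamiltonian_gap:
  fixes A A' B B' \<Lambda> :: real
  assumes "A \<le> 2 * B\<^sup>2" "2 * B'\<^sup>2 \<le> A'" "\<bar>B\<bar> \<le> \<Lambda>" "\<bar>B'\<bar> \<le> \<Lambda>"
  shows "A - A' \<le> 4 * \<Lambda> * \<bar>B - B'\<bar>"
proof -
  have "(B - B') * (B + B') \<le> \<bar>B - B'\<bar> * \<bar>B + B'\<bar>"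
    by (metis abs_ge_self abs_mult)
  also have "\<dots> \<le> \<bar>B - B'\<bar> * (2 * \<Lambda>)"
    using assms(3,4) by (intro mult_left_mono) auto
  finally have "(B - B') * (B + B') \<le> \<bar>B - B'\<bar> * (2 * \<Lambda>)" .
  with assms(1,2) show ?thesis by (simp add: power2_eq_square algebra_simps)
qed

definition barrier :: "real \<Rightarrow> real" where
  "barrier h = h / (1 + h)"

lemma barrier_bounds: "h \<ge> 0 \<Longrightarrow> 0 \<le> barrier h \<and> barrier h \<le> 1"
  unfolding barrier_def by auto

lemma barrier_taylor:
  assumes "h \<ge> 0" "h0 \<ge> 0"
  shows "barrier h0 + (h - h0) / (1 + h0)\<^sup>2 - (h - h0)\<^sup>2 \<le> barrier h"
proof -
  have inv: "\<And>a c :: real. a > 0 \<Longrightarrow> c > 0 \<Longrightarrow>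
      (1 - 1 / a) - (1 - 1 / c) - (a - c) / c\<^sup>2 = - (a - c)\<^sup>2 / (c\<^sup>2 * a)"
    by (simp add: field_simps power2_eq_square)
  have "barrier x = 1 - 1 / (1 + x)" if "x \<ge> 0" for x
    using that unfolding barrier_def by (simp add: field_simps)
  then have "barrier h - barrier h0 - (h - h0) / (1 + h0)\<^sup>2 = - (h - h0)\<^sup>2 / ((1 + h0)\<^sup>2 * (1 + h))"
    using inv[of "1 + h" "1 + h0"] assms by simp
  moreover have "1 * 1 \<le> (1 + h0)\<^sup>2 * (1 + h)"
    using assms by (intro mult_mono one_le_power) auto
  then have "(h - h0)\<^sup>2 / ((1 + h0)\<^sup>2 * (1 + h)) \<le> (h - h0)\<^sup>2 / 1"
    by (intro divide_left_mono) auto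
  ultimately show ?thesis by simp
qed

lemma inverse_taylor:
  fixes u d :: real
  assumes "u > 0" "\<bar>d\<bar> \<le> u / 2"
  shows "1 / (u - d) \<le> 1 / u + d / u\<^sup>2 + 2 * d\<^sup>2 / u ^ 3"
proof -
  have ud: "u - d \<ge> u / 2" using assms by auto
  have "1 / (u - d) - 1 / u - d / u\<^sup>2 = d\<^sup>2 / (u\<^sup>2 * (u - d))"
    using assms ud by (simp add: field_simps power2_eq_square)
  also have "\<dots> \<le> d\<^sup>2 / (u\<^sup>2 * (u / 2))"
    using assms ud by (intro divide_left_mono mult_left_mono mult_pos_pos) auto
  also have "\<dots> = 2 * d\<^sup>2 / u ^ 3"
    using assms by (simp add: field_simps power2_eq_square power3_eq_cube)
  finally show ?thesis by simp
qed

text \<open>The localizing penalty of the doubling argument: the first term confines \<open>h\<close>, the barrier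
  pushes maxima off the boundary \<open>h = 0\<close> and the last term keeps \<open>t\<close> away from the horizon \<open>T\<close>.\<close>

definition localizer :: "real \<Rightarrow> real \<Rightarrow> real \<Rightarrow> real \<Rightarrow> real \<Rightarrow> real \<times> real \<Rightarrow> real" where
  "localizer \<eta> V \<gamma> \<delta> T = (\<lambda>(t, h). \<eta> * (h + V * t)\<^sup>2 - \<gamma> * barrier h + \<delta> / (T - t))"

lemma localizer_taylor:
  assumes "\<eta> \<ge> 0" "\<gamma> \<ge> 0" "\<delta> \<ge> 0" "t0 < T" "\<bar>t - t0\<bar> \<le> (T - t0) / 2" "h \<ge> 0" "h0 \<ge> 0"
  shows "localizer \<eta> V \<gamma> \<delta> T (t, h) - localizer \<eta> V \<gamma> \<delta> T (t0, h0) \<le>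
      (2 * \<eta> * V * (h0 + V * t0) + \<delta> / (T - t0)\<^sup>2) * (t - t0)
    + (2 * \<eta> * (h0 + V * t0) - \<gamma> / (1 + h0)\<^sup>2) * (h - h0)
    + (2 * \<eta> * (1 + V\<^sup>2) + \<gamma> + 2 * \<delta> / (T - t0) ^ 3) * ((t - t0)\<^sup>2 + (h - h0)\<^sup>2)"
proof -
  define dt dh where "dt = t - t0" and "dh = h - h0"
  have "(dh + V * dt)\<^sup>2 \<le> 2 * dh\<^sup>2 + 2 * (V * dt)\<^sup>2"
    using zero_le_power2[of "dh - V * dt"] by (simp add: power2_eq_square algebra_simps)
  also have "\<dots> \<le> 2 * (1 + V\<^sup>2) * (dt\<^sup>2 + dh\<^sup>2)"
    using zero_le_power2[of dt] zero_le_power2[of "V * dh"]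
    by (simp add: power2_eq_square algebra_simps)
  finally have "\<eta> * (dh + V * dt)\<^sup>2 \<le> \<eta> * (2 * (1 + V\<^sup>2) * (dt\<^sup>2 + dh\<^sup>2))"
    using assms(1) by (rule mult_left_mono)
  moreover have "\<eta> * (h + V * t)\<^sup>2 - \<eta> * (h0 + V * t0)\<^sup>2
      = 2 * \<eta> * (h0 + V * t0) * (dh + V * dt) + \<eta> * (dh + V * dt)\<^sup>2"
    unfolding dt_def dh_def by (simp add: power2_eq_square algebra_simps)
  ultimately have sq: "\<eta> * (h + V * t)\<^sup>2 - \<eta> * (h0 + V * t0)\<^sup>2
      \<le> 2 * \<eta> * (h0 + V * t0) * (dh + V * dt) + \<eta> * (2 * (1 + V\<^sup>2) * (dt\<^sup>2 + dh\<^sup>2))"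
    by linarith
  have bar: "\<gamma> * barrier h0 - \<gamma> * barrier h \<le> - (\<gamma> / (1 + h0)\<^sup>2) * dh + \<gamma> * (dt\<^sup>2 + dh\<^sup>2)"
    using mult_left_mono[OF barrier_taylor[OF assms(6,7)] assms(2)] mult_nonneg_nonneg[OF assms(2) zero_le_power2[of dt]]
    unfolding dh_def by (simp add: algebra_simps add_divide_distrib diff_divide_distrib)
  have "\<delta> * (1 / ((T - t0) - dt)) \<le> \<delta> * (1 / (T - t0) + dt / (T - t0)\<^sup>2 + 2 * dt\<^sup>2 / (T - t0) ^ 3)"
    using assms(3-5) inverse_taylor[of "T - t0" dt] unfolding dt_def by (intro mult_left_mono) auto
  moreover have "2 * \<delta> / (T - t0) ^ 3 * dt\<^sup>2 \<le> 2 * \<delta> / (T - t0) ^ 3 * (dt\<^sup>2 + dh\<^sup>2)"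
    using assms(3,4) by (intro mult_left_mono) auto
  ultimately have inv: "\<delta> / (T - t) - \<delta> / (T - t0) \<le> \<delta> / (T - t0)\<^sup>2 * dt + 2 * \<delta> / (T - t0) ^ 3 * (dt\<^sup>2 + dh\<^sup>2)"
    unfolding dt_def by (simp add: algebra_simps)
  show ?thesis
    using sq bar inv unfolding localizer_def dt_def dh_def by (simp add: algebra_simps)
qed


lemma localizer_continuous_on: "continuous_on ({..<T} \<times> {0..}) (localizer \<eta> V \<gamma> \<delta> T)"
  unfolding localizer_def barrier_def split_def
  by (intro continuous_intros) (auto simp: add_nonneg_pos)

locale doubling =
  fixes u v :: "real \<times> real \<Rightarrow> real" and \<Lambda> T \<delta> \<gamma> \<eta> :: real
  assumes sub: "viscosity_subsolution u" and super: "viscosity_supersolution v"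
    and lip_u: "\<And>t h h'. t \<ge> 0 \<Longrightarrow> h \<ge> 0 \<Longrightarrow> h' \<ge> 0 \<Longrightarrow> \<bar>u (t, h) - u (t, h')\<bar> \<le> \<Lambda> * \<bar>h - h'\<bar>"
    and lip_v: "\<And>t h h'. t \<ge> 0 \<Longrightarrow> h \<ge> 0 \<Longrightarrow> h' \<ge> 0 \<Longrightarrow> \<bar>v (t, h) - v (t, h')\<bar> \<le> \<Lambda> * \<bar>h - h'\<bar>"
    and \<Lambda>_pos: "\<Lambda> > 0" and T_pos: "T > 0" and \<delta>_pos: "\<delta> > 0"
    and \<gamma>_eq: "8 * \<Lambda> * \<gamma> * T\<^sup>2 = \<delta>"
    and \<eta>_pos: "\<eta> > 0" and \<eta>_small: "8 * \<Lambda> * \<eta> * T \<le> \<gamma>"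
begin

abbreviation w :: "real \<times> real \<Rightarrow> real" where
  "w \<equiv> localizer \<eta> (4 * \<Lambda>) \<gamma> \<delta> T"

definition doubled :: "real \<Rightarrow> (real \<times> real) \<times> (real \<times> real) \<Rightarrow> real" where
  "doubled \<alpha> = (\<lambda>((t, h), (s, k)).
     u (t, h) - v (s, k) - ((t - s)\<^sup>2 + (h - k)\<^sup>2) / (2 * \<alpha>) - w (t, h) - w (s, k))"

lemma doubled_eq:
  "doubled \<alpha> ((t, h), (s, k)) = u (t, h) - v (s, k) - ((t - s)\<^sup>2 + (h - k)\<^sup>2) / (2 * \<alpha>) - w (t, h) - w (s, k)"
  by (simp add: doubled_def)

abbreviation strip :: "(real \<times> real) set" where
  "strip \<equiv> {0..<T} \<times> {0..}"

lemma \<gamma>_pos: "\<gamma> > 0"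
  using \<gamma>_eq \<delta>_pos \<Lambda>_pos T_pos by (auto simp: zero_less_mult_iff)

lemma drift_below_barrier:
  assumes "t < T"
  shows "2 * \<eta> * (4 * \<Lambda> * t) < \<gamma>"
proof -
  have "8 * \<Lambda> * \<eta> * t < 8 * \<Lambda> * \<eta> * T"
    using assms \<eta>_pos \<Lambda>_pos by (intro mult_strict_left_mono) auto
  then show ?thesis using \<eta>_small by (simp add: algebra_simps)
qed

lemma doubled_max_sub_jet:
  assumes "\<alpha> > 0" and P: "(t, h) \<in> strip" "(s, k) \<in> strip" and "t > 0"
    and max: "\<And>p. p \<in> strip \<Longrightarrow> doubled \<alpha> (p, (s, k)) \<le> doubled \<alpha> ((t, h), (s, k))"
  defines "B \<equiv> (h - k) / \<alpha> + 2 * \<eta> * (h + 4 * \<Lambda> * t) - \<gamma> / (1 + h)\<^sup>2"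
  shows "(t - s) / \<alpha> + 2 * \<eta> * (4 * \<Lambda>) * (h + 4 * \<Lambda> * t) + \<delta> / (T - t)\<^sup>2 \<le> 2 * B\<^sup>2"
    and "\<bar>B\<bar> \<le> \<Lambda>"
proof -
  define A where "A = (t - s) / \<alpha> + 2 * \<eta> * (4 * \<Lambda>) * (h + 4 * \<Lambda> * t) + \<delta> / (T - t)\<^sup>2"
  define M where "M = 1 / (2 * \<alpha>) + 2 * \<eta> * (1 + (4 * \<Lambda>)\<^sup>2) + \<gamma> + 2 * \<delta> / (T - t) ^ 3"
  have e: "(T - t) / 2 > 0" using P by auto
  have jet: "u (t', h') - u (t, h) \<le> A * (t' - t) + B * (h' - h) + M * ((t' - t)\<^sup>2 + (h' - h)\<^sup>2)"
    if "t' > 0" "h' \<ge> 0" "dist (t', h') (t, h) < (T - t) / 2" for t' h'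
  proof -
    have close: "\<bar>t' - t\<bar> \<le> (T - t) / 2"
      using that(3) dist_fst_le[of "(t', h')" "(t, h)"] by (simp add: dist_real_def)
    have "t' - t \<le> (T - t) / 2" using close by (rule abs_le_D1)
    then have "t' < T" using P by auto
    then have "(t', h') \<in> strip" using that by auto
    then have "u (t', h') - u (t, h) \<le> ((t' - s)\<^sup>2 + (h' - k)\<^sup>2 - ((t - s)\<^sup>2 + (h - k)\<^sup>2)) / (2 * \<alpha>)
        + (w (t', h') - w (t, h))"
      using max[of "(t', h')"] unfolding doubled_def by (simp add: diff_divide_distrib)
    moreover have "((t' - s)\<^sup>2 + (h' - k)\<^sup>2 - ((t - s)\<^sup>2 + (h - k)\<^sup>2)) / (2 * \<alpha>)
        = (t - s) / \<alpha> * (t' - t) + (h - k) / \<alpha> * (h' - h) + 1 / (2 * \<alpha>) * ((t' - t)\<^sup>2 + (h' - h)\<^sup>2)"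
      using \<open>\<alpha> > 0\<close> by (simp add: field_simps power2_eq_square)
    moreover have "w (t', h') - w (t, h) \<le>
        (2 * \<eta> * (4 * \<Lambda>) * (h + 4 * \<Lambda> * t) + \<delta> / (T - t)\<^sup>2) * (t' - t)
      + (2 * \<eta> * (h + 4 * \<Lambda> * t) - \<gamma> / (1 + h)\<^sup>2) * (h' - h)
      + (2 * \<eta> * (1 + (4 * \<Lambda>)\<^sup>2) + \<gamma> + 2 * \<delta> / (T - t) ^ 3) * ((t' - t)\<^sup>2 + (h' - h)\<^sup>2)"
      using close that P \<eta>_pos \<gamma>_pos \<delta>_pos by (intro localizer_taylor) auto
    ultimately show ?thesis
      unfolding A_def B_def M_def by (simp only: ring_distribs add_divide_distrib; linarith)
  qed
  have visc: "if h > 0 then A - 2 * B\<^sup>2 \<le> 0 else min (- B) (A - 2 * B\<^sup>2) \<le> 0"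
    using P by (intro subsolution_upper_jet[OF sub \<open>t > 0\<close> _ e jet]) auto
  have jet_h: "u (t, h') - u (t, h) \<le> B * (h' - h) + M * (h' - h)\<^sup>2"
    if "h' \<ge> 0" "\<bar>h' - h\<bar> < (T - t) / 2" for h'
    using jet[of t h'] that \<open>t > 0\<close> by (simp add: dist_Pair_Pair dist_real_def)
  have lip_h: "\<bar>u (t, h') - u (t, h)\<bar> \<le> \<Lambda> * \<bar>h' - h\<bar>" if "h' \<ge> 0" for h'
    using lip_u[of t h' h] that P by auto
  have "- \<Lambda> \<le> B" "h > 0 \<Longrightarrow> B \<le> \<Lambda>"
    using upper_jet_slope_bounds[OF e _ jet_h lip_h] P by auto
  moreover have "B < 0" if "h = 0"
  proof -
    have "(h - k) / \<alpha> \<le> 0" "\<gamma> / (1 + h)\<^sup>2 = \<gamma>" "2 * \<eta> * (h + 4 * \<Lambda> * t) < \<gamma>"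
      using that P \<open>\<alpha> > 0\<close> drift_below_barrier[of t] by (auto simp: divide_nonpos_pos)
    then show ?thesis unfolding B_def by linarith
  qed
  ultimately show "A \<le> 2 * B\<^sup>2" "\<bar>B\<bar> \<le> \<Lambda>"
    using visc P by (auto split: if_splits)
qed


lemma doubled_max_super_jet:
  assumes "\<alpha> > 0" and P: "(t, h) \<in> strip" "(s, k) \<in> strip" and "s > 0"
    and max: "\<And>q. q \<in> strip \<Longrightarrow> doubled \<alpha> ((t, h), q) \<le> doubled \<alpha> ((t, h), (s, k))"
  defines "B \<equiv> (h - k) / \<alpha> - 2 * \<eta> * (k + 4 * \<Lambda> * s) + \<gamma> / (1 + k)\<^sup>2"
  shows "2 * B\<^sup>2 \<le> (t - s) / \<alpha> - 2 * \<eta> * (4 * \<Lambda>) * (k + 4 * \<Lambda> * s) - \<delta> / (T - s)\<^sup>2"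
    and "\<bar>B\<bar> \<le> \<Lambda>"
proof -
  define A where "A = (t - s) / \<alpha> - 2 * \<eta> * (4 * \<Lambda>) * (k + 4 * \<Lambda> * s) - \<delta> / (T - s)\<^sup>2"
  define M where "M = 1 / (2 * \<alpha>) + 2 * \<eta> * (1 + (4 * \<Lambda>)\<^sup>2) + \<gamma> + 2 * \<delta> / (T - s) ^ 3"
  have e: "(T - s) / 2 > 0" using P by auto
  have jet: "A * (s' - s) + B * (k' - k) - M * ((s' - s)\<^sup>2 + (k' - k)\<^sup>2) \<le> v (s', k') - v (s, k)"
    if "s' > 0" "k' \<ge> 0" "dist (s', k') (s, k) < (T - s) / 2" for s' k'
  proof -
    have close: "\<bar>s' - s\<bar> \<le> (T - s) / 2"
      using that(3) dist_fst_le[of "(s', k')" "(s, k)"] by (simp add: dist_real_def)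
    have "s' - s \<le> (T - s) / 2" using close by (rule abs_le_D1)
    then have "s' < T" using P by auto
    then have "(s', k') \<in> strip" using that by auto
    then have "- (((t - s')\<^sup>2 + (h - k')\<^sup>2 - ((t - s)\<^sup>2 + (h - k)\<^sup>2)) / (2 * \<alpha>))
        - (w (s', k') - w (s, k)) \<le> v (s', k') - v (s, k)"
      using max[of "(s', k')"] unfolding doubled_def by (simp add: diff_divide_distrib)
    moreover have "((t - s')\<^sup>2 + (h - k')\<^sup>2 - ((t - s)\<^sup>2 + (h - k)\<^sup>2)) / (2 * \<alpha>)
        = - ((t - s) / \<alpha> * (s' - s)) - (h - k) / \<alpha> * (k' - k) + 1 / (2 * \<alpha>) * ((s' - s)\<^sup>2 + (k' - k)\<^sup>2)"
      using \<open>\<alpha> > 0\<close> by (simp add: field_simps power2_eq_square)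
    moreover have "w (s', k') - w (s, k) \<le>
        (2 * \<eta> * (4 * \<Lambda>) * (k + 4 * \<Lambda> * s) + \<delta> / (T - s)\<^sup>2) * (s' - s)
      + (2 * \<eta> * (k + 4 * \<Lambda> * s) - \<gamma> / (1 + k)\<^sup>2) * (k' - k)
      + (2 * \<eta> * (1 + (4 * \<Lambda>)\<^sup>2) + \<gamma> + 2 * \<delta> / (T - s) ^ 3) * ((s' - s)\<^sup>2 + (k' - k)\<^sup>2)"
      using close that P \<eta>_pos \<gamma>_pos \<delta>_pos by (intro localizer_taylor) auto
    ultimately show ?thesis
      unfolding A_def B_def M_def by (simp only: ring_distribs add_divide_distrib diff_divide_distrib; linarith)
  qed
  have visc: "if k > 0 then A - 2 * B\<^sup>2 \<ge> 0 else max (- B) (A - 2 * B\<^sup>2) \<ge> 0"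
    using P by (intro supersolution_lower_jet[OF super \<open>s > 0\<close> _ e jet]) auto
  have jet_k: "- v (s, k') - - v (s, k) \<le> - B * (k' - k) + M * (k' - k)\<^sup>2"
    if "k' \<ge> 0" "\<bar>k' - k\<bar> < (T - s) / 2" for k'
    using jet[of s k'] that \<open>s > 0\<close> by (simp add: dist_Pair_Pair dist_real_def)
  have lip_k: "\<bar>- v (s, k') - - v (s, k)\<bar> \<le> \<Lambda> * \<bar>k' - k\<bar>" if "k' \<ge> 0" for k'
    using lip_v[of s k' k] that P by (auto simp: abs_minus_commute)
  have "- \<Lambda> \<le> - B" "k > 0 \<Longrightarrow> - B \<le> \<Lambda>"
    using upper_jet_slope_bounds[OF e _ jet_k lip_k] P by auto
  moreover have "B > 0" if "k = 0"
  proof -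
    have "0 \<le> (h - k) / \<alpha>" "\<gamma> / (1 + k)\<^sup>2 = \<gamma>" "2 * \<eta> * (k + 4 * \<Lambda> * s) < \<gamma>"
      using that P \<open>\<alpha> > 0\<close> drift_below_barrier[of s] by auto
    then show ?thesis unfolding B_def by linarith
  qed
  ultimately show "2 * B\<^sup>2 \<le> A" "\<bar>B\<bar> \<le> \<Lambda>"
    using visc P by (auto split: if_splits)
qed

lemma doubled_max_not_interior:
  assumes "\<alpha> > 0" and P: "(t, h) \<in> strip" "(s, k) \<in> strip" and "t > 0" "s > 0"
    and max: "\<And>q. q \<in> strip \<times> strip \<Longrightarrow> doubled \<alpha> q \<le> doubled \<alpha> ((t, h), (s, k))"
  shows False
proof -
  define B where "B = (h - k) / \<alpha> + 2 * \<eta> * (h + 4 * \<Lambda> * t) - \<gamma> / (1 + h)\<^sup>2"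
  define B' where "B' = (h - k) / \<alpha> - 2 * \<eta> * (k + 4 * \<Lambda> * s) + \<gamma> / (1 + k)\<^sup>2"
  have "doubled \<alpha> (p, (s, k)) \<le> doubled \<alpha> ((t, h), (s, k))"
    "doubled \<alpha> ((t, h), p) \<le> doubled \<alpha> ((t, h), (s, k))" if "p \<in> strip" for p
    using max that P by auto
  note sub_jet = doubled_max_sub_jet[OF \<open>\<alpha> > 0\<close> P \<open>t > 0\<close> this(1), folded B_def]
    and super_jet = doubled_max_super_jet[OF \<open>\<alpha> > 0\<close> P \<open>s > 0\<close> this(2), folded B'_def]
  have "\<bar>B - B'\<bar> \<le> 2 * \<eta> * ((h + 4 * \<Lambda> * t) + (k + 4 * \<Lambda> * s)) + 2 * \<gamma>"
  proof -
    have "\<gamma> / (1 + x)\<^sup>2 \<le> \<gamma> / 1" "0 \<le> \<gamma> / (1 + x)\<^sup>2" if "x \<ge> 0" for x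
      using that \<gamma>_pos by (intro divide_left_mono one_le_power, auto)
    then have "0 \<le> \<gamma> / (1 + h)\<^sup>2" "\<gamma> / (1 + h)\<^sup>2 \<le> \<gamma>" "0 \<le> \<gamma> / (1 + k)\<^sup>2" "\<gamma> / (1 + k)\<^sup>2 \<le> \<gamma>"
      using P by force+
    moreover have "0 \<le> \<eta> * ((h + 4 * \<Lambda> * t) + (k + 4 * \<Lambda> * s))"
      using P \<eta>_pos \<Lambda>_pos by auto
    moreover have "B - B' = 2 * \<eta> * ((h + 4 * \<Lambda> * t) + (k + 4 * \<Lambda> * s)) - (\<gamma> / (1 + h)\<^sup>2 + \<gamma> / (1 + k)\<^sup>2)"
      unfolding B_def B'_def by (simp add: algebra_simps)
    ultimately show ?thesis by (simp only: abs_le_iff) linarith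
  qed
  then have "4 * \<Lambda> * \<bar>B - B'\<bar> \<le> 4 * \<Lambda> * (2 * \<eta> * ((h + 4 * \<Lambda> * t) + (k + 4 * \<Lambda> * s)) + 2 * \<gamma>)"
    using \<Lambda>_pos by (intro mult_left_mono) auto
  then have "\<delta> / (T - t)\<^sup>2 + \<delta> / (T - s)\<^sup>2 \<le> 8 * \<Lambda> * \<gamma>"
    using hamiltonian_gap[OF sub_jet(1) super_jet(1) sub_jet(2) super_jet(2)] by (simp add: algebra_simps)
  moreover have "\<delta> / T\<^sup>2 \<le> \<delta> / (T - t)\<^sup>2" "\<delta> / T\<^sup>2 \<le> \<delta> / (T - s)\<^sup>2"
    using P \<delta>_pos by (auto intro!: divide_left_mono power_mono mult_pos_pos)
  moreover have "8 * \<Lambda> * \<gamma> = \<delta> / T\<^sup>2" "\<delta> / T\<^sup>2 > 0"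
    using \<gamma>_eq T_pos \<delta>_pos by (auto simp: field_simps)
  ultimately show False by linarith
qed


lemma localizer_lower_bounds:
  assumes "(t, h) \<in> strip"
  shows "\<eta> * h\<^sup>2 - \<gamma> + \<delta> / (T - t) \<le> w (t, h)" and "- \<gamma> \<le> w (t, h)"
proof -
  have "\<eta> * h\<^sup>2 \<le> \<eta> * (h + 4 * \<Lambda> * t)\<^sup>2"
    using assms \<eta>_pos \<Lambda>_pos by (intro mult_left_mono power_mono) auto
  moreover have "\<gamma> * barrier h \<le> \<gamma>" "0 \<le> \<delta> / (T - t)" "0 \<le> \<eta> * h\<^sup>2"
    using assms barrier_bounds[of h] \<gamma>_pos \<delta>_pos \<eta>_pos by (auto simp: mult_left_le)
  ultimately show "\<eta> * h\<^sup>2 - \<gamma> + \<delta> / (T - t) \<le> w (t, h)" "- \<gamma> \<le> w (t, h)"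
    unfolding localizer_def by auto
qed

lemma doubled_le_difference:
  assumes "\<alpha> > 0" "(t, h) \<in> strip" "(s, k) \<in> strip"
  shows "doubled \<alpha> ((t, h), (s, k)) \<le> u (t, h) - v (s, k) + 2 * \<gamma>"
proof -
  have "0 \<le> ((t - s)\<^sup>2 + (h - k)\<^sup>2) / (2 * \<alpha>)"
    using assms(1) by simp
  then show ?thesis
    using localizer_lower_bounds(2)[OF assms(2)] localizer_lower_bounds(2)[OF assms(3)]
    unfolding doubled_def by simp
qed

lemma doubled_nonneg_bounds:
  assumes "\<alpha> > 0" and U: "\<And>t. t \<in> {0..T} \<Longrightarrow> \<bar>u (t, 0)\<bar> + \<bar>v (t, 0)\<bar> \<le> U"
    and P: "(t, h) \<in> strip" "(s, k) \<in> strip" and nonneg: "0 \<le> doubled \<alpha> ((t, h), (s, k))"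
  defines "R \<equiv> 1 + (2 * U + 2 * \<gamma> + \<Lambda>\<^sup>2 / (4 * \<eta>) + \<Lambda>) / \<eta>"
  shows "h \<le> R" "k \<le> R"
    and "\<delta> / (T - t) + \<delta> / (T - s) + ((t - s)\<^sup>2 + (h - k)\<^sup>2) / (2 * \<alpha>)
      \<le> 2 * U + 2 * \<gamma> + 2 * \<Lambda> * R"
proof -
  have "u (t, h) \<le> \<bar>u (t, 0)\<bar> + \<Lambda> * h" "- v (s, k) \<le> \<bar>v (s, 0)\<bar> + \<Lambda> * k"
    using lip_u[of t h 0] lip_v[of s k 0] P by auto
  moreover have "\<bar>u (t, 0)\<bar> \<le> U" "\<bar>v (s, 0)\<bar> \<le> U"
    using U[of t] U[of s] P by force+
  moreover have "\<eta> * h\<^sup>2 - \<gamma> + \<delta> / (T - t) \<le> w (t, h)" "\<eta> * k\<^sup>2 - \<gamma> + \<delta> / (T - s) \<le> w (s, k)"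
    using localizer_lower_bounds P by auto
  ultimately have bound: "\<eta> * h\<^sup>2 + \<eta> * k\<^sup>2 + (\<delta> / (T - t) + \<delta> / (T - s)
      + ((t - s)\<^sup>2 + (h - k)\<^sup>2) / (2 * \<alpha>)) \<le> 2 * U + 2 * \<gamma> + \<Lambda> * h + \<Lambda> * k"
    using nonneg unfolding doubled_eq by linarith
  have U0: "0 \<le> U" using U[of 0] T_pos by force
  have "0 \<le> ((t - s)\<^sup>2 + (h - k)\<^sup>2) / (2 * \<alpha>)" "0 \<le> \<delta> / (T - t)" "0 \<le> \<delta> / (T - s)"
    using assms(1) P \<delta>_pos by auto
  with bound have sq: "\<eta> * h\<^sup>2 + \<eta> * k\<^sup>2 \<le> 2 * U + 2 * \<gamma> + \<Lambda> * h + \<Lambda> * k" by linarith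
  have "\<eta> * h\<^sup>2 \<le> (2 * U + 2 * \<gamma> + \<Lambda>\<^sup>2 / (4 * \<eta>)) + \<Lambda> * h"
    "\<eta> * k\<^sup>2 \<le> (2 * U + 2 * \<gamma> + \<Lambda>\<^sup>2 / (4 * \<eta>)) + \<Lambda> * k"
    using sq linear_minus_quadratic_le[OF \<eta>_pos, of \<Lambda> h] linear_minus_quadratic_le[OF \<eta>_pos, of \<Lambda> k]
    by linarith+
  then show hR: "h \<le> R" and kR: "k \<le> R"
    unfolding R_def using P U0 \<gamma>_pos \<eta>_pos \<Lambda>_pos
    by (auto intro!: quadratic_le_linear_bound[OF \<eta>_pos])
  have "\<Lambda> * h \<le> \<Lambda> * R" "\<Lambda> * k \<le> \<Lambda> * R" "0 \<le> \<eta> * h\<^sup>2" "0 \<le> \<eta> * k\<^sup>2"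
    using hR kR \<Lambda>_pos \<eta>_pos by simp_all
  with bound show "\<delta> / (T - t) + \<delta> / (T - s) + ((t - s)\<^sup>2 + (h - k)\<^sup>2) / (2 * \<alpha>)
      \<le> 2 * U + 2 * \<gamma> + 2 * \<Lambda> * R"
    by linarith
qed


lemma doubled_continuous_on:
  assumes "\<theta> > 0" "\<alpha> > 0"
  shows "continuous_on (({0..T - \<theta>} \<times> {0..}) \<times> ({0..T - \<theta>} \<times> {0..})) (doubled \<alpha>)"
proof -
  let ?K = "({0..T - \<theta>} \<times> {0..}) \<times> ({0..T - \<theta>} \<times> {0::real..})"
  have cu: "continuous_on ({0..} \<times> {0..}) u" and cv: "continuous_on ({0..} \<times> {0..}) v"
    using sub super unfolding viscosity_subsolution_def viscosity_supersolution_def by blast+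
  have u: "continuous_on ?K (\<lambda>p. u (fst p))"
    by (rule continuous_on_compose2[OF cu continuous_on_fst[OF continuous_on_id]]) auto
  have v: "continuous_on ?K (\<lambda>p. v (snd p))"
    by (rule continuous_on_compose2[OF cv continuous_on_snd[OF continuous_on_id]]) auto
  have "continuous_on ?K (\<lambda>p. w (fst p))" "continuous_on ?K (\<lambda>p. w (snd p))"
    using assms by (auto intro!: continuous_on_compose2[OF localizer_continuous_on] continuous_intros)
  then have pen: "continuous_on ?K (\<lambda>p. ((fst (fst p) - fst (snd p))\<^sup>2 + (snd (fst p) - snd (snd p))\<^sup>2)
      / (2 * \<alpha>) + w (fst p) + w (snd p))"
    using assms(2) by (intro continuous_on_add continuous_on_divide continuous_intros) auto
  have "doubled \<alpha> = (\<lambda>p. u (fst p) - v (snd p) - (((fst (fst p) - fst (snd p))\<^sup>2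
      + (snd (fst p) - snd (snd p))\<^sup>2) / (2 * \<alpha>) + w (fst p) + w (snd p)))"
    by (auto simp: fun_eq_iff doubled_def)
  then show ?thesis
    unfolding \<open>doubled \<alpha> = _\<close> by (intro continuous_on_diff u v pen)
qed

lemma doubled_attains_max:
  assumes "\<alpha> > 0" and U: "\<And>t. t \<in> {0..T} \<Longrightarrow> \<bar>u (t, 0)\<bar> + \<bar>v (t, 0)\<bar> \<le> U"
    and "p0 \<in> strip \<times> strip" "0 \<le> doubled \<alpha> p0"
  obtains P where "P \<in> strip \<times> strip" "\<And>q. q \<in> strip \<times> strip \<Longrightarrow> doubled \<alpha> q \<le> doubled \<alpha> P"
    "doubled \<alpha> p0 \<le> doubled \<alpha> P"
proof -
  define R where "R = 1 + (2 * U + 2 * \<gamma> + \<Lambda>\<^sup>2 / (4 * \<eta>) + \<Lambda>) / \<eta>"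
  define C where "C = 2 * U + 2 * \<gamma> + 2 * \<Lambda> * R"
  define K where "K = ({0..T - \<delta> / C} \<times> {0..R}) \<times> ({0..T - \<delta> / C} \<times> {0..R})"
  have "0 \<le> U" using U[of 0] T_pos by force
  then have "R \<ge> 1"
    using \<gamma>_pos \<eta>_pos \<Lambda>_pos unfolding R_def by auto
  then have "C > 0"
    using \<open>0 \<le> U\<close> \<gamma>_pos \<Lambda>_pos unfolding C_def by (simp add: add_nonneg_pos)
  then have \<theta>: "\<delta> / C > 0" using \<delta>_pos by simp
  have superlevel: "q \<in> K" if "q \<in> strip \<times> strip" "0 \<le> doubled \<alpha> q" for q
  proof -
    obtain t h s k where q: "q = ((t, h), (s, k))" by (metis prod.collapse)
    have mem: "(t, h) \<in> strip" "(s, k) \<in> strip" and nn: "0 \<le> doubled \<alpha> ((t, h), (s, k))"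
      using that unfolding q by auto
    note bounds = doubled_nonneg_bounds[OF assms(1) U mem nn, folded R_def C_def]
    have "0 \<le> ((t - s)\<^sup>2 + (h - k)\<^sup>2) / (2 * \<alpha>)" "0 \<le> \<delta> / (T - t)" "0 \<le> \<delta> / (T - s)"
      using mem \<open>\<alpha> > 0\<close> \<delta>_pos by auto
    then have "\<delta> / (T - t) \<le> C" "\<delta> / (T - s) \<le> C"
      using bounds(3) by linarith+
    then have "\<delta> \<le> C * (T - t)" "\<delta> \<le> C * (T - s)"
      using mem by (simp_all add: pos_divide_le_eq)
    then have "\<delta> / C \<le> T - t" "\<delta> / C \<le> T - s"
      using \<open>C > 0\<close> by (auto simp: pos_divide_le_eq mult.commute)
    then have "t \<le> T - \<delta> / C" "s \<le> T - \<delta> / C" by auto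
    then show ?thesis using bounds mem unfolding q K_def by auto
  qed
  have "compact K" unfolding K_def by (intro compact_Times compact_Icc)
  moreover have "continuous_on K (doubled \<alpha>)"
    by (rule continuous_on_subset[OF doubled_continuous_on[OF \<theta> \<open>\<alpha> > 0\<close>]]) (auto simp: K_def)
  moreover have "p0 \<in> K" using superlevel assms(3,4) .
  ultimately obtain P where "P \<in> K" "\<And>q. q \<in> strip \<times> strip \<Longrightarrow> doubled \<alpha> q \<le> doubled \<alpha> P"
    "doubled \<alpha> p0 \<le> doubled \<alpha> P"
    using continuous_attains_sup_superlevel[of K "doubled \<alpha>" p0 "strip \<times> strip"] superlevel assms(4)
    by blast
  moreover have "K \<subseteq> strip \<times> strip" using \<theta> unfolding K_def by auto
  ultimately show ?thesis using that by blast
qed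

end

lemma uniform_modulus_on_box:
  fixes f :: "real \<times> real \<Rightarrow> real"
  assumes "continuous_on ({0..} \<times> {0..}) f" "e > 0"
  obtains d where "d > 0"
    "\<And>x y. x \<in> {0..T} \<times> {0..R} \<Longrightarrow> y \<in> {0..T} \<times> {0..R} \<Longrightarrow> dist x y < d \<Longrightarrow> \<bar>f x - f y\<bar> < e"
proof -
  have "continuous_on ({0..T} \<times> {0..R}) f"
    by (rule continuous_on_subset[OF assms(1)]) auto
  then have "uniformly_continuous_on ({0..T} \<times> {0..R}) f"
    by (intro compact_uniformly_continuous compact_Times compact_Icc)
  then show ?thesis
    using assms(2) that unfolding uniformly_continuous_on_def dist_real_def by metis
qed

lemma (in doubling) doubled_max_contradiction:
  assumes init: "\<And>h. h \<ge> 0 \<Longrightarrow> u (0, h) \<le> v (0, h)"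
    and "\<alpha> > 0" and P: "(t, h) \<in> strip" "(s, k) \<in> strip"
    and max: "\<And>q. q \<in> strip \<times> strip \<Longrightarrow> doubled \<alpha> q \<le> doubled \<alpha> ((t, h), (s, k))"
    and close: "\<bar>u (t, h) - u (s, k)\<bar> < \<epsilon>" "\<bar>v (t, h) - v (s, k)\<bar> < \<epsilon>"
    and large: "\<epsilon> + 2 * \<gamma> < doubled \<alpha> ((t, h), (s, k))"
  shows False
proof -
  have gap: "\<epsilon> < u (t, h) - v (s, k)"
    using doubled_le_difference[OF \<open>\<alpha> > 0\<close> P] large by linarith
  consider "t = 0" | "s = 0" | "t > 0" "s > 0" using P by force
  then show False
  proof cases
    case 1
    then show False using init[of h] close(2) gap P by auto
  next
    case 2
    then show False using init[of k] close(1) gap P by auto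
  next
    case 3
    then show False using doubled_max_not_interior[OF \<open>\<alpha> > 0\<close> P _ _ max] by blast
  qed
qed

lemma doubling_parameters:
  fixes u v :: "real \<times> real \<Rightarrow> real"
  assumes sub: "viscosity_subsolution u" and super: "viscosity_supersolution v"
    and lip_u: "\<And>t h h'. t \<ge> 0 \<Longrightarrow> h \<ge> 0 \<Longrightarrow> h' \<ge> 0 \<Longrightarrow> \<bar>u (t, h) - u (t, h')\<bar> \<le> Lu * \<bar>h - h'\<bar>"
    and lip_v: "\<And>t h h'. t \<ge> 0 \<Longrightarrow> h \<ge> 0 \<Longrightarrow> h' \<ge> 0 \<Longrightarrow> \<bar>v (t, h) - v (t, h')\<bar> \<le> Lv * \<bar>h - h'\<bar>"
    and "\<mu> > 0" "t0 \<ge> 0" "h0 \<ge> 0"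
  obtains \<Lambda> T \<delta> \<gamma> \<eta> where "doubling u v \<Lambda> T \<delta> \<gamma> \<eta>" "t0 < T" "2 * \<gamma> \<le> \<mu> / 64"
    "2 * localizer \<eta> (4 * \<Lambda>) \<gamma> \<delta> T (t0, h0) \<le> \<mu> / 4"
proof -
  define \<Lambda> where "\<Lambda> = max (max Lu Lv) 0 + 1"
  define T where "T = t0 + 1"
  define \<delta> where "\<delta> = \<mu> / 16"
  define \<gamma> where "\<gamma> = \<delta> / (8 * \<Lambda> * T\<^sup>2)"
  define q where "q = (h0 + 4 * \<Lambda> * t0)\<^sup>2 + 1"
  define \<eta> where "\<eta> = min (\<gamma> / (8 * \<Lambda> * T)) (\<mu> / (16 * q))"
  have params: "\<Lambda> \<ge> 1" "T \<ge> 1" "\<delta> > 0" "\<gamma> > 0" "q > 0"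
    using assms unfolding \<Lambda>_def T_def \<delta>_def \<gamma>_def q_def by (auto simp: add_nonneg_pos)
  have "\<eta> > 0" "\<eta> * (8 * \<Lambda> * T) \<le> \<gamma>" "\<eta> * (16 * q) \<le> \<mu>"
    using params \<open>\<mu> > 0\<close> unfolding \<eta>_def by (auto simp flip: pos_le_divide_eq)
  then have \<eta>: "\<eta> > 0" "8 * \<Lambda> * \<eta> * T \<le> \<gamma>" "\<eta> * (h0 + 4 * \<Lambda> * t0)\<^sup>2 \<le> \<mu> / 16"
    unfolding q_def by (auto simp: algebra_simps)
  have "1 * 1 \<le> \<Lambda> * T\<^sup>2"
    using params by (intro mult_mono one_le_power) auto
  then have \<gamma>: "8 * \<Lambda> * \<gamma> * T\<^sup>2 = \<delta>" "2 * \<gamma> \<le> \<mu> / 64"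
    using params unfolding \<gamma>_def \<delta>_def by (auto simp: field_simps)
  have "\<bar>u (t, h) - u (t, h')\<bar> \<le> \<Lambda> * \<bar>h - h'\<bar>" "\<bar>v (t, h) - v (t, h')\<bar> \<le> \<Lambda> * \<bar>h - h'\<bar>"
    if "t \<ge> 0" "h \<ge> 0" "h' \<ge> 0" for t h h'
    using order.trans[OF lip_u[OF that] mult_right_mono[OF _ abs_ge_zero]]
      order.trans[OF lip_v[OF that] mult_right_mono[OF _ abs_ge_zero]]
    unfolding \<Lambda>_def by auto
  then have "doubling u v \<Lambda> T \<delta> \<gamma> \<eta>"
    using params \<eta> \<gamma> sub super by unfold_locales auto
  moreover have "localizer \<eta> (4 * \<Lambda>) \<gamma> \<delta> T (t0, h0) = \<eta> * (h0 + 4 * \<Lambda> * t0)\<^sup>2 - \<gamma> * barrier h0 + \<delta>"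
    unfolding localizer_def T_def by simp
  moreover have "0 \<le> \<gamma> * barrier h0"
    using params barrier_bounds[OF \<open>h0 \<ge> 0\<close>] by simp
  ultimately show ?thesis
    using that \<gamma> \<eta>(3) unfolding T_def \<delta>_def by simp
qed

theorem comparison_principle:
  fixes u v :: "real \<times> real \<Rightarrow> real"
  assumes sub: "viscosity_subsolution u" and super: "viscosity_supersolution v"
    and lip_u: "\<And>t h h'. t \<ge> 0 \<Longrightarrow> h \<ge> 0 \<Longrightarrow> h' \<ge> 0 \<Longrightarrow> \<bar>u (t, h) - u (t, h')\<bar> \<le> Lu * \<bar>h - h'\<bar>"
    and lip_v: "\<And>t h h'. t \<ge> 0 \<Longrightarrow> h \<ge> 0 \<Longrightarrow> h' \<ge> 0 \<Longrightarrow> \<bar>v (t, h) - v (t, h')\<bar> \<le> Lv * \<bar>h - h'\<bar>"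
    and init: "\<And>h. h \<ge> 0 \<Longrightarrow> u (0, h) \<le> v (0, h)"
    and "t0 \<ge> 0" "h0 \<ge> 0"
  shows "u (t0, h0) \<le> v (t0, h0)"
proof (rule ccontr)
  define \<mu> where "\<mu> = u (t0, h0) - v (t0, h0)"
  assume "\<not> u (t0, h0) \<le> v (t0, h0)"
  then have "\<mu> > 0" unfolding \<mu>_def by simp
  then obtain \<Lambda> T \<delta> \<gamma> \<eta> where "doubling u v \<Lambda> T \<delta> \<gamma> \<eta>" "t0 < T" "2 * \<gamma> \<le> \<mu> / 64"
    and w0: "2 * localizer \<eta> (4 * \<Lambda>) \<gamma> \<delta> T (t0, h0) \<le> \<mu> / 4"
    using doubling_parameters[OF sub super lip_u lip_v] assms(6,7) by blast
  then interpret doubling u v \<Lambda> T \<delta> \<gamma> \<eta> by simp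
  have cu: "continuous_on ({0..} \<times> {0..}) u" and cv: "continuous_on ({0..} \<times> {0..}) v"
    using sub super unfolding viscosity_subsolution_def viscosity_supersolution_def by blast+
  have cont: "continuous_on {0..T} (\<lambda>t. \<bar>u (t, 0)\<bar> + \<bar>v (t, 0)\<bar>)"
    by (intro continuous_intros continuous_on_compose2[OF cu] continuous_on_compose2[OF cv]) auto
  obtain t1 where U: "\<And>t. t \<in> {0..T} \<Longrightarrow> \<bar>u (t, 0)\<bar> + \<bar>v (t, 0)\<bar> \<le> \<bar>u (t1, 0)\<bar> + \<bar>v (t1, 0)\<bar>"
    using continuous_attains_sup[OF compact_Icc _ cont] T_pos by fastforce
  define U where "U = \<bar>u (t1, 0)\<bar> + \<bar>v (t1, 0)\<bar>"
  define R where "R = 1 + (2 * U + 2 * \<gamma> + \<Lambda>\<^sup>2 / (4 * \<eta>) + \<Lambda>) / \<eta>"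
  define C where "C = 2 * U + 2 * \<gamma> + 2 * \<Lambda> * R"
  have "\<mu> / 4 > 0" using \<open>\<mu> > 0\<close> by simp
  obtain du where "du > 0" and du: "\<And>x y. x \<in> {0..T} \<times> {0..R} \<Longrightarrow> y \<in> {0..T} \<times> {0..R} \<Longrightarrow>
      dist x y < du \<Longrightarrow> \<bar>u x - u y\<bar> < \<mu> / 4"
    using uniform_modulus_on_box[OF cu \<open>\<mu> / 4 > 0\<close>, where T=T and R=R] by blast
  obtain dv where "dv > 0" and dv: "\<And>x y. x \<in> {0..T} \<times> {0..R} \<Longrightarrow> y \<in> {0..T} \<times> {0..R} \<Longrightarrow>
      dist x y < dv \<Longrightarrow> \<bar>v x - v y\<bar> < \<mu> / 4"
    using uniform_modulus_on_box[OF cv \<open>\<mu> / 4 > 0\<close>, where T=T and R=R] by blast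
  define d where "d = min du dv"
  have "U \<ge> 0" unfolding U_def by simp
  then have "C > 0" using \<gamma>_pos \<eta>_pos \<Lambda>_pos unfolding C_def R_def by (simp add: add_pos_nonneg)
  define \<alpha> where "\<alpha> = d\<^sup>2 / (4 * C)"
  have "d > 0" using \<open>du > 0\<close> \<open>dv > 0\<close> unfolding d_def by simp
  then have "\<alpha> > 0" "C * (2 * \<alpha>) < d\<^sup>2"
    using \<open>C > 0\<close> unfolding \<alpha>_def by (auto simp: field_simps)
  have p0: "((t0, h0), (t0, h0)) \<in> strip \<times> strip" "0 \<le> doubled \<alpha> ((t0, h0), (t0, h0))"
    "3 * \<mu> / 4 \<le> doubled \<alpha> ((t0, h0), (t0, h0))"
    using \<open>t0 < T\<close> assms(6,7) w0 \<open>\<mu> > 0\<close> unfolding doubled_eq \<mu>_def by auto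
  obtain P where "P \<in> strip \<times> strip" and max: "\<And>q. q \<in> strip \<times> strip \<Longrightarrow> doubled \<alpha> q \<le> doubled \<alpha> P"
    and "doubled \<alpha> ((t0, h0), (t0, h0)) \<le> doubled \<alpha> P"
    using doubled_attains_max[OF \<open>\<alpha> > 0\<close> U[folded U_def] p0(1,2)] by blast
  moreover obtain t h s k where "P = ((t, h), (s, k))" by (metis prod.collapse)
  ultimately have P: "(t, h) \<in> strip" "(s, k) \<in> strip"
    and max: "\<And>q. q \<in> strip \<times> strip \<Longrightarrow> doubled \<alpha> q \<le> doubled \<alpha> ((t, h), (s, k))"
    and large: "3 * \<mu> / 4 \<le> doubled \<alpha> ((t, h), (s, k))"
    using p0(3) by auto
  have "0 \<le> doubled \<alpha> ((t, h), (s, k))" using large \<open>\<mu> > 0\<close> by linarith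
  note bounds = doubled_nonneg_bounds[OF \<open>\<alpha> > 0\<close> U[folded U_def] P this, folded R_def C_def]
  have "0 \<le> \<delta> / (T - t)" "0 \<le> \<delta> / (T - s)"
    using P \<delta>_pos by auto
  then have "((t - s)\<^sup>2 + (h - k)\<^sup>2) / (2 * \<alpha>) \<le> C"
    using bounds(3) by linarith
  then have "(t - s)\<^sup>2 + (h - k)\<^sup>2 < d\<^sup>2"
    using \<open>\<alpha> > 0\<close> \<open>C * (2 * \<alpha>) < d\<^sup>2\<close> by (simp add: pos_divide_le_eq)
  then have "dist (t, h) (s, k) < d"
    using \<open>d > 0\<close> by (simp add: dist_Pair_Pair dist_real_def real_less_lsqrt)
  moreover have "(t, h) \<in> {0..T} \<times> {0..R}" "(s, k) \<in> {0..T} \<times> {0..R}"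
    using P bounds by auto
  ultimately have "\<bar>u (t, h) - u (s, k)\<bar> < \<mu> / 4" "\<bar>v (t, h) - v (s, k)\<bar> < \<mu> / 4"
    using du dv unfolding d_def by auto
  moreover have "\<mu> / 4 + 2 * \<gamma> < doubled \<alpha> ((t, h), (s, k))"
    using large \<open>2 * \<gamma> \<le> \<mu> / 64\<close> \<open>\<mu> > 0\<close> by linarith
  ultimately show False
    using doubled_max_contradiction[OF init \<open>\<alpha> > 0\<close> P max] by blast
qed

section \<open>The Hopf--Lax formula\<close>

definition hopf_lax_formula :: "(real \<Rightarrow> real) \<Rightarrow> real \<times> real \<Rightarrow> real" where
  "hopf_lax_formula \<psi> = (\<lambda>(t, h). if t = 0 then \<psi> h else (SUP h'\<in>{0..}. \<psi> h' - (h - h')\<^sup>2 / (8 * t)))"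

lemma hopf_lax_eq_formula: "hopf_lax P = hopf_lax_formula (psi P)"
  unfolding hopf_lax_def hopf_lax_formula_def by simp

lemma linear_minus_quadratic_le':
  fixes L x t :: real
  assumes "t > 0"
  shows "L * x - x\<^sup>2 / (8 * t) \<le> 2 * L\<^sup>2 * t"
proof -
  have "0 \<le> (x - 4 * L * t)\<^sup>2" by simp
  then have "8 * t * (L * x) - x\<^sup>2 \<le> 16 * L\<^sup>2 * t\<^sup>2"
    by (simp add: power2_eq_square algebra_simps)
  then show ?thesis using assms by (simp add: field_simps power2_eq_square)
qed

lemma quadratic_split:
  fixes a b s r :: real
  assumes "s > 0" "r > 0"
  shows "(a + b)\<^sup>2 / (s + r) \<le> a\<^sup>2 / s + b\<^sup>2 / r"
proof -
  have "0 \<le> (a * r - b * s)\<^sup>2" by simp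
  then have "(a + b)\<^sup>2 * (s * r) \<le> (a\<^sup>2 * r + b\<^sup>2 * s) * (s + r)"
    by (simp add: power2_eq_square algebra_simps)
  then show ?thesis using assms by (simp add: field_simps)
qed

lemma DERIV_right_local_max:
  fixes f :: "real \<Rightarrow> real"
  assumes "DERIV f x :> l" "d > 0" "\<And>y. x \<le> y \<Longrightarrow> y < x + d \<Longrightarrow> f y \<le> f x"
  shows "l \<le> 0"
proof (rule ccontr)
  assume "\<not> l \<le> 0"
  then obtain d' where "d' > 0" and inc: "\<And>h. h > 0 \<Longrightarrow> h < d' \<Longrightarrow> f x < f (x + h)"
    using DERIV_pos_inc_right[OF assms(1)] by force
  then have "f x < f (x + min d d' / 2)"
    using assms(2) by (intro inc) auto
  moreover have "f (x + min d d' / 2) \<le> f x"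
    using assms(2) \<open>d' > 0\<close> by (intro assms(3)) auto
  ultimately show False by simp
qed

locale lipschitz_datum =
  fixes \<psi> :: "real \<Rightarrow> real" and L :: real
  assumes lipschitz: "L-lipschitz_on {0..} \<psi>"
begin

abbreviation HL :: "real \<times> real \<Rightarrow> real" where
  "HL \<equiv> hopf_lax_formula \<psi>"

lemma L_nonneg: "L \<ge> 0"
  using lipschitz by (rule lipschitz_on_nonneg)

lemma psi_lipschitz: "h \<ge> 0 \<Longrightarrow> h' \<ge> 0 \<Longrightarrow> \<bar>\<psi> h - \<psi> h'\<bar> \<le> L * \<bar>h - h'\<bar>"
  using lipschitz_onD[OF lipschitz] by (simp add: dist_real_def)

lemma hopf_lax_term_le:
  assumes "t > 0" "h \<ge> 0" "h' \<ge> 0"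
  shows "\<psi> h' - (h - h')\<^sup>2 / (8 * t) \<le> \<psi> h + 2 * L\<^sup>2 * t"
  using psi_lipschitz[OF assms(3,2)] linear_minus_quadratic_le'[OF assms(1), of L "\<bar>h - h'\<bar>"]
  by (simp add: abs_minus_commute)

lemma hopf_lax_ge:
  assumes "t > 0" "h \<ge> 0" "h' \<ge> 0"
  shows "\<psi> h' - (h - h')\<^sup>2 / (8 * t) \<le> HL (t, h)"
proof -
  have "bdd_above ((\<lambda>h'. \<psi> h' - (h - h')\<^sup>2 / (8 * t)) ` {0..})"
    using hopf_lax_term_le[OF assms(1,2)] by (intro bdd_aboveI[of _ "\<psi> h + 2 * L\<^sup>2 * t"]) auto
  then show ?thesis
    using assms unfolding hopf_lax_formula_def by (auto intro: cSUP_upper)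
qed

lemma hopf_lax_le:
  assumes "t > 0" "\<And>h'. h' \<ge> 0 \<Longrightarrow> \<psi> h' - (h - h')\<^sup>2 / (8 * t) \<le> X"
  shows "HL (t, h) \<le> X"
  using assms unfolding hopf_lax_formula_def by (auto intro: cSUP_least)

lemma hopf_lax_initial: "HL (0, h) = \<psi> h"
  unfolding hopf_lax_formula_def by simp

lemma hopf_lax_ge_initial: "t \<ge> 0 \<Longrightarrow> h \<ge> 0 \<Longrightarrow> \<psi> h \<le> HL (t, h)"
  using hopf_lax_ge[of t h h] by (cases "t = 0") (auto simp: hopf_lax_initial)

lemma hopf_lax_le_initial:
  assumes "t \<ge> 0" "h \<ge> 0"
  shows "HL (t, h) \<le> \<psi> h + 2 * L\<^sup>2 * t"
proof (cases "t = 0")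
  case False
  then show ?thesis using assms hopf_lax_term_le by (intro hopf_lax_le) auto
qed (simp add: hopf_lax_initial)

lemma hopf_lax_lipschitz_h:
  assumes "t \<ge> 0" "0 \<le> h1" "h1 \<le> h2"
  shows "\<bar>HL (t, h1) - HL (t, h2)\<bar> \<le> L * (h2 - h1)"
proof (cases "t = 0")
  case True
  then show ?thesis using psi_lipschitz[of h1 h2] assms by (simp add: hopf_lax_initial)
next
  case False
  then have t: "t > 0" using assms by simp
  have "HL (t, h1) \<le> HL (t, h2) + L * (h2 - h1)"
  proof (rule hopf_lax_le[OF t])
    fix h' :: real assume "h' \<ge> 0"
    then have "\<psi> h' \<le> \<psi> (h' + (h2 - h1)) + L * (h2 - h1)"
      and "\<psi> (h' + (h2 - h1)) - (h2 - (h' + (h2 - h1)))\<^sup>2 / (8 * t) \<le> HL (t, h2)"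
      using psi_lipschitz[of h' "h' + (h2 - h1)"] hopf_lax_ge[OF t, of h2 "h' + (h2 - h1)"] assms
      by auto
    then show "\<psi> h' - (h1 - h')\<^sup>2 / (8 * t) \<le> HL (t, h2) + L * (h2 - h1)"
      by (simp add: algebra_simps)
  qed
  moreover have "HL (t, h2) \<le> HL (t, h1) + L * (h2 - h1)"
  proof (rule hopf_lax_le[OF t])
    fix h' :: real assume "h' \<ge> 0"
    define k where "k = max 0 (h' - (h2 - h1))"
    have "k \<ge> 0" "\<bar>h' - k\<bar> \<le> h2 - h1"
      using \<open>h' \<ge> 0\<close> assms unfolding k_def by auto
    then have "\<psi> h' \<le> \<psi> k + L * (h2 - h1)"
      using psi_lipschitz[of h' k] \<open>h' \<ge> 0\<close> mult_left_mono[OF _ L_nonneg] by force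
    moreover have "(h1 - k)\<^sup>2 \<le> (h2 - h')\<^sup>2"
      using \<open>h' \<ge> 0\<close> assms unfolding k_def by (auto simp: max_def intro!: power_mono)
    then have "(h1 - k)\<^sup>2 / (8 * t) \<le> (h2 - h')\<^sup>2 / (8 * t)"
      using t by (simp add: divide_right_mono)
    moreover have "\<psi> k - (h1 - k)\<^sup>2 / (8 * t) \<le> HL (t, h1)"
      using hopf_lax_ge[OF t, of h1 k] assms unfolding k_def by auto
    ultimately show "\<psi> h' - (h2 - h')\<^sup>2 / (8 * t) \<le> HL (t, h1) + L * (h2 - h1)"
      by linarith
  qed
  ultimately show ?thesis by (simp add: abs_le_iff)
qed

lemma hopf_lax_lipschitz:
  assumes "t \<ge> 0" "h1 \<ge> 0" "h2 \<ge> 0"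
  shows "\<bar>HL (t, h1) - HL (t, h2)\<bar> \<le> L * \<bar>h1 - h2\<bar>"
  using hopf_lax_lipschitz_h[of t h1 h2] hopf_lax_lipschitz_h[of t h2 h1] assms
  by (cases "h1 \<le> h2") (auto simp: abs_minus_commute)

lemma hopf_lax_mono_t:
  assumes "0 \<le> t" "t \<le> t'" "h \<ge> 0"
  shows "HL (t, h) \<le> HL (t', h)"
proof (cases "t = 0")
  case True
  then show ?thesis using hopf_lax_ge_initial assms by (simp add: hopf_lax_initial)
next
  case False
  then have "t > 0" using assms by simp
  show ?thesis
  proof (rule hopf_lax_le[OF \<open>t > 0\<close>])
    fix h' :: real assume "h' \<ge> 0"
    have "(h - h')\<^sup>2 / (8 * t') \<le> (h - h')\<^sup>2 / (8 * t)"
      using assms \<open>t > 0\<close> by (intro divide_left_mono) auto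
    moreover have "\<psi> h' - (h - h')\<^sup>2 / (8 * t') \<le> HL (t', h)"
      using assms \<open>t > 0\<close> \<open>h' \<ge> 0\<close> by (intro hopf_lax_ge) auto
    ultimately show "\<psi> h' - (h - h')\<^sup>2 / (8 * t) \<le> HL (t', h)" by linarith
  qed
qed

text \<open>Splitting the segment from \<open>h'\<close> to \<open>h\<close> at \<open>k\<close> in the ratio \<open>t : t' - t\<close> splits the
  quadratic cost exactly; this gives the dynamic programming bound behind the time regularity.\<close>

lemma hopf_lax_time_step:
  assumes "0 < t" "t < t'" "h \<ge> 0"
  shows "HL (t', h) \<le> HL (t, h) + 2 * L\<^sup>2 * (t' - t)"
proof (rule hopf_lax_le)
  show "t' > 0" using assms by simp
  fix h' :: real assume "h' \<ge> 0"
  define k where "k = h' + t / t' * (h - h')"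
  have "k = (1 - t / t') * h' + t / t' * h"
    unfolding k_def by (simp add: algebra_simps diff_divide_distrib)
  moreover have "0 \<le> t / t'" "t / t' \<le> 1" using assms by auto
  ultimately have "k \<ge> 0" using \<open>h' \<ge> 0\<close> assms by simp
  have split: "(h - h')\<^sup>2 / (8 * t') = (k - h')\<^sup>2 / (8 * t) + (h - k)\<^sup>2 / (8 * (t' - t))"
    using assms unfolding k_def by (simp add: field_simps power2_eq_square)
  have "\<psi> h' - (k - h')\<^sup>2 / (8 * t) \<le> HL (t, k)"
    using hopf_lax_ge assms \<open>k \<ge> 0\<close> \<open>h' \<ge> 0\<close> by simp
  also have "\<dots> \<le> HL (t, h) + L * \<bar>h - k\<bar>"
    using hopf_lax_lipschitz[of t h k] assms \<open>k \<ge> 0\<close> by auto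
  finally have "\<psi> h' - (h - h')\<^sup>2 / (8 * t') \<le> HL (t, h) + (L * \<bar>h - k\<bar> - \<bar>h - k\<bar>\<^sup>2 / (8 * (t' - t)))"
    unfolding split by simp
  also have "\<dots> \<le> HL (t, h) + 2 * L\<^sup>2 * (t' - t)"
    using linear_minus_quadratic_le'[of "t' - t" L "\<bar>h - k\<bar>"] assms by simp
  finally show "\<psi> h' - (h - h')\<^sup>2 / (8 * t') \<le> HL (t, h) + 2 * L\<^sup>2 * (t' - t)" .
qed

lemma hopf_lax_lipschitz_t:
  assumes "t \<ge> 0" "t' \<ge> 0" "h \<ge> 0"
  shows "\<bar>HL (t, h) - HL (t', h)\<bar> \<le> 2 * L\<^sup>2 * \<bar>t - t'\<bar>"
proof -
  have "HL (t, h) \<le> HL (t', h) \<and> HL (t', h) \<le> HL (t, h) + 2 * L\<^sup>2 * (t' - t)"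
    if "0 \<le> t" "t \<le> t'" for t t'
  proof (cases "t = 0 \<or> t = t'")
    case True
    then show ?thesis
      using hopf_lax_ge_initial hopf_lax_le_initial that assms by (auto simp: hopf_lax_initial)
  qed (use that assms hopf_lax_mono_t hopf_lax_time_step in auto)
  from this[of t t'] this[of t' t] assms show ?thesis
    by (cases "t \<le> t'") (auto simp: abs_le_iff)
qed

lemma hopf_lax_continuous: "continuous_on ({0..} \<times> {0..}) HL"
proof (rule lipschitz_on_continuous_on[of "L + 2 * L\<^sup>2"], rule lipschitz_onI)
  fix p q :: "real \<times> real" assume "p \<in> {0..} \<times> {0..}" "q \<in> {0..} \<times> {0..}"
  moreover obtain t h t' h' where "p = (t, h)" "q = (t', h')" by (metis prod.collapse)
  ultimately have "\<bar>HL p - HL q\<bar> \<le> L * \<bar>h - h'\<bar> + 2 * L\<^sup>2 * \<bar>t - t'\<bar>"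
    using hopf_lax_lipschitz[of t h h'] hopf_lax_lipschitz_t[of t t' h'] by auto
  also have "\<dots> \<le> L * dist p q + 2 * L\<^sup>2 * dist p q"
    using dist_snd_le[of p q] dist_fst_le[of p q] L_nonneg \<open>p = (t, h)\<close> \<open>q = (t', h')\<close>
    by (intro add_mono mult_left_mono) (auto simp: dist_real_def)
  finally show "dist (HL p) (HL q) \<le> (L + 2 * L\<^sup>2) * dist p q"
    by (simp add: dist_real_def algebra_simps)
qed (use L_nonneg in simp)

lemma hopf_lax_attained:
  assumes "t > 0" "h \<ge> 0"
  obtains hmax where "hmax \<ge> 0" "HL (t, h) = \<psi> hmax - (h - hmax)\<^sup>2 / (8 * t)"
proof -
  define f where "f = (\<lambda>h'. \<psi> h' - (h - h')\<^sup>2 / (8 * t))"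
  have "continuous_on {0..h + 8 * t * L} f"
    unfolding f_def using assms
    by (intro continuous_intros continuous_on_subset[OF lipschitz_on_continuous_on[OF lipschitz]]) auto
  moreover have "{0..h + 8 * t * L} \<noteq> {}" using assms L_nonneg by auto
  ultimately obtain hmax where hs: "hmax \<in> {0..h + 8 * t * L}" "\<And>y. y \<in> {0..h + 8 * t * L} \<Longrightarrow> f y \<le> f hmax"
    using continuous_attains_sup[OF compact_Icc] by metis
  have "f y \<le> f hmax" if "y \<ge> 0" for y
  proof (cases "y \<le> h + 8 * t * L")
    case False
    moreover have "0 \<le> L * (8 * t)" using assms L_nonneg by simp
    ultimately have "h \<le> y" "L * (8 * t) \<le> y - h" by (auto simp: algebra_simps)
    then have "L * (8 * t) * (y - h) \<le> (y - h) * (y - h)"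
      by (intro mult_right_mono) auto
    then have "L * (y - h) \<le> (y - h)\<^sup>2 / (8 * t)"
      using assms by (simp add: field_simps power2_eq_square)
    moreover have "\<psi> y \<le> \<psi> h + L * (y - h)"
      using psi_lipschitz[of y h] that assms \<open>h \<le> y\<close> by auto
    moreover have "f h \<le> f hmax" using hs assms L_nonneg by auto
    ultimately show ?thesis unfolding f_def by (simp add: power2_commute)
  qed (use hs that in auto)
  then have "HL (t, h) = f hmax"
    using hopf_lax_le[OF assms(1)] hopf_lax_ge[OF assms] hs(1) unfolding f_def
    by (meson antisym atLeastAtMost_iff)
  then show ?thesis using that hs(1) unfolding f_def by auto
qed

lemma hopf_lax_dynamic_programming:
  assumes "0 < s" "s < t" "h \<ge> 0" "k \<ge> 0"
  shows "HL (s, k) \<le> HL (t, h) + (h - k)\<^sup>2 / (8 * (t - s))"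
proof (rule hopf_lax_le[OF assms(1)])
  fix h' :: real assume "h' \<ge> 0"
  have "((k - h') + (h - k))\<^sup>2 / (s + (t - s)) \<le> (k - h')\<^sup>2 / s + (h - k)\<^sup>2 / (t - s)"
    using assms by (intro quadratic_split) auto
  then have "((h - h')\<^sup>2 / t) / 8 \<le> ((k - h')\<^sup>2 / s + (h - k)\<^sup>2 / (t - s)) / 8"
    by (intro divide_right_mono) simp_all
  then have "(h - h')\<^sup>2 / (8 * t) \<le> (k - h')\<^sup>2 / (8 * s) + (h - k)\<^sup>2 / (8 * (t - s))"
    by (simp add: add_divide_distrib mult.commute)
  moreover have "\<psi> h' - (h - h')\<^sup>2 / (8 * t) \<le> HL (t, h)"
    using assms \<open>h' \<ge> 0\<close> by (intro hopf_lax_ge) auto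
  ultimately show "\<psi> h' - (k - h')\<^sup>2 / (8 * s) \<le> HL (t, h) + (h - k)\<^sup>2 / (8 * (t - s))"
    by linarith
qed

lemma hopf_lax_subsolution: "viscosity_subsolution HL"
  unfolding viscosity_subsolution_def
proof (intro conjI hopf_lax_continuous allI impI)
  fix t h :: real and \<phi>
  assume "0 < t \<and> 0 \<le> h \<and> smooth2 \<phi> \<and> local_max_at (\<lambda>y. HL y - \<phi> y) (t, h)"
  then have t: "t > 0" and h: "h \<ge> 0" and sm: "smooth2 \<phi>"
    and "\<exists>e>0. \<forall>y\<in>{0<..} \<times> {0..}. dist y (t, h) < e \<longrightarrow> HL y - \<phi> y \<le> HL (t, h) - \<phi> (t, h)"
    unfolding local_max_at_def by auto
  then obtain e where "e > 0"
    and lm: "\<And>y. y \<in> {0<..} \<times> {0..} \<Longrightarrow> dist y (t, h) < e \<Longrightarrow> HL y - \<phi> y \<le> HL (t, h) - \<phi> (t, h)"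
    by blast
  obtain m where "m \<ge> 0" and m: "HL (t, h) = \<psi> m - (h - m)\<^sup>2 / (8 * t)"
    using hopf_lax_attained[OF t h] by blast
  text \<open>Freezing the maximizer \<open>m\<close> gives smooth minorants of \<open>HL\<close> touching at \<open>(t, h)\<close>.\<close>
  define r where "r s = \<psi> m - (h - m)\<^sup>2 / (8 * s) - \<phi> (s, h)" for s
  have dr: "DERIV r t :> (h - m)\<^sup>2 / (8 * t\<^sup>2) - pdt \<phi> (t, h)"
    unfolding r_def using t smooth2_has_derivative_t[OF sm]
    by (auto intro!: derivative_eq_intros simp: power2_eq_square field_simps)
  have r_le: "r y \<le> r t" if "\<bar>t - y\<bar> < min e t" for y
  proof -
    have "y > 0" using that by auto
    then show ?thesis
      using lm[of "(y, h)"] hopf_lax_ge[of y h m] that h \<open>m \<ge> 0\<close> m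
      by (auto simp: r_def dist_Pair_Pair dist_real_def abs_minus_commute)
  qed
  have "(h - m)\<^sup>2 / (8 * t\<^sup>2) - pdt \<phi> (t, h) = 0"
    by (rule DERIV_local_max[OF dr, of "min e t"]) (use r_le \<open>e > 0\<close> t in auto)
  then have pt: "pdt \<phi> (t, h) = (h - m)\<^sup>2 / (8 * t\<^sup>2)" by simp
  define r' where "r' k = \<psi> m - (k - m)\<^sup>2 / (8 * t) - \<phi> (t, k)" for k
  have dr': "DERIV r' h :> - ((h - m) / (4 * t)) - pdh \<phi> (t, h)"
    unfolding r'_def using t smooth2_has_derivative_h[OF sm]
    by (auto intro!: derivative_eq_intros simp: power2_eq_square field_simps)
  have r'_le: "r' k \<le> r' h" if "k \<ge> 0" "\<bar>k - h\<bar> < e" for k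
    using lm[of "(t, k)"] hopf_lax_ge[OF t that(1) \<open>m \<ge> 0\<close>] that t m
    by (auto simp: r'_def dist_Pair_Pair dist_real_def)
  show "if h > 0 then pdt \<phi> (t, h) - 2 * (pdh \<phi> (t, h))\<^sup>2 \<le> 0
        else min (- pdh \<phi> (t, h)) (pdt \<phi> (t, h) - 2 * (pdh \<phi> (t, h))\<^sup>2) \<le> 0"
  proof (cases "h > 0")
    case True
    have "- ((h - m) / (4 * t)) - pdh \<phi> (t, h) = 0"
    proof (rule DERIV_local_max[OF dr', of "min e h"])
      show "\<forall>y. \<bar>h - y\<bar> < min e h \<longrightarrow> r' y \<le> r' h"
        using r'_le by (auto simp: abs_minus_commute)
    qed (use True \<open>e > 0\<close> in simp)
    then have "2 * (pdh \<phi> (t, h))\<^sup>2 = (h - m)\<^sup>2 / (8 * t\<^sup>2)"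
      using t by (simp add: power2_eq_square field_simps)
    then show ?thesis using True pt by simp
  next
    case False
    then have "- ((h - m) / (4 * t)) - pdh \<phi> (t, h) \<le> 0"
      using DERIV_right_local_max[OF dr' \<open>e > 0\<close>] r'_le h by auto
    moreover have "m / (4 * t) \<ge> 0" using \<open>m \<ge> 0\<close> t by simp
    ultimately show ?thesis using False h by simp
  qed
qed

lemma hopf_lax_supersolution: "viscosity_supersolution HL"
  unfolding viscosity_supersolution_def
proof (intro conjI hopf_lax_continuous allI impI)
  fix t h :: real and \<phi>
  assume "0 < t \<and> 0 \<le> h \<and> smooth2 \<phi> \<and> local_min_at (\<lambda>y. HL y - \<phi> y) (t, h)"
  then have t: "t > 0" and h: "h \<ge> 0" and sm: "smooth2 \<phi>"
    and "\<exists>e>0. \<forall>y\<in>{0<..} \<times> {0..}. dist y (t, h) < e \<longrightarrow> HL (t, h) - \<phi> (t, h) \<le> HL y - \<phi> y"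
    unfolding local_min_at_def by auto
  then obtain e where "e > 0"
    and lm: "\<And>y. y \<in> {0<..} \<times> {0..} \<Longrightarrow> dist y (t, h) < e \<Longrightarrow> HL (t, h) - \<phi> (t, h) \<le> HL y - \<phi> y"
    by blast
  define p q where "p = pdh \<phi> (t, h)" and "q = pdt \<phi> (t, h)"
  text \<open>Moving backwards in time with speed \<open>c = -4p\<close> (the optimal velocity) costs at most
    \<open>c\<^sup>2/8\<close> per unit time by the dynamic programming bound.\<close>
  have key: "q - 2 * p\<^sup>2 \<ge> 0" if "h > 0 \<or> p \<ge> 0"
  proof -
    define c where "c = - 4 * p"
    define b where "b = min (t / 2) (min (e / (2 * (1 + \<bar>c\<bar>))) (if c > 0 then h / c else 1))"
    have "b > 0" unfolding b_def using t \<open>e > 0\<close> that by (auto simp: c_def intro: divide_pos_neg)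
    have "(\<phi> (t - \<epsilon>, h - \<epsilon> * c) - \<phi> (t, h)) / \<epsilon> \<le> c\<^sup>2 / 8" if "0 < \<epsilon>" "\<epsilon> < b" for \<epsilon>
    proof -
      have s: "0 < t - \<epsilon>" "t - \<epsilon> < t" using that unfolding b_def by auto
      have k: "h - \<epsilon> * c \<ge> 0"
      proof (cases "c > 0")
        case True
        then have "\<epsilon> * c < h" using that unfolding b_def by (simp add: field_simps)
        then show ?thesis by simp
      next
        case False
        then have "\<epsilon> * c \<le> 0" using that by (simp add: mult_nonneg_nonpos)
        then show ?thesis using h by simp
      qed
      have "dist (t - \<epsilon>, h - \<epsilon> * c) (t, h) \<le> \<bar>(t - \<epsilon>) - t\<bar> + \<bar>(h - \<epsilon> * c) - h\<bar>"
        unfolding dist_Pair_Pair dist_real_def using sqrt_sum_squares_le_sum_abs by simp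
      also have "\<dots> = \<epsilon> + \<epsilon> * \<bar>c\<bar>"
        using that by (simp add: abs_mult)
      also have "\<dots> < e"
      proof -
        have "\<epsilon> < e / (2 * (1 + \<bar>c\<bar>))" using that unfolding b_def by auto
        then have "\<epsilon> * (1 + \<bar>c\<bar>) < e / 2" by (simp add: field_simps)
        then show ?thesis using \<open>e > 0\<close> by (simp add: algebra_simps)
      qed
      finally have "HL (t, h) - \<phi> (t, h) \<le> HL (t - \<epsilon>, h - \<epsilon> * c) - \<phi> (t - \<epsilon>, h - \<epsilon> * c)"
        using lm s k by auto
      moreover have "HL (t - \<epsilon>, h - \<epsilon> * c) \<le> HL (t, h) + (h - (h - \<epsilon> * c))\<^sup>2 / (8 * (t - (t - \<epsilon>)))"
        using s k h by (intro hopf_lax_dynamic_programming) auto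
      moreover have "(h - (h - \<epsilon> * c))\<^sup>2 / (8 * (t - (t - \<epsilon>))) = \<epsilon> * (c\<^sup>2 / 8)"
        using that by (simp add: power2_eq_square field_simps)
      ultimately have "\<phi> (t - \<epsilon>, h - \<epsilon> * c) - \<phi> (t, h) \<le> \<epsilon> * (c\<^sup>2 / 8)"
        by linarith
      then show ?thesis using that by (simp add: field_simps)
    qed
    then have "- q - c * p \<le> c\<^sup>2 / 8"
      using \<open>b > 0\<close> unfolding p_def q_def
      by (intro tendsto_upperbound[OF smooth2_directional_quotient[OF sm]])
        (auto simp: eventually_at_right_field)
    then show ?thesis unfolding c_def by (simp add: power2_eq_square algebra_simps)
  qed
  show "if h > 0 then pdt \<phi> (t, h) - 2 * (pdh \<phi> (t, h))\<^sup>2 \<ge> 0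
        else max (- pdh \<phi> (t, h)) (pdt \<phi> (t, h) - 2 * (pdh \<phi> (t, h))\<^sup>2) \<ge> 0"
    using key unfolding p_def q_def by (cases "h > 0"; cases "pdh \<phi> (t, h) \<ge> 0") auto
qed

end

section \<open>Lipschitz continuity of \<open>psi\<close>\<close>

lemma (in prob_space) distr_pair_snd:
  assumes "sigma_finite_measure N"
  shows "distr (M \<Otimes>\<^sub>M N) N snd = N"
proof -
  interpret N: sigma_finite_measure N by fact
  show ?thesis
  proof (intro measure_eqI)
    fix A assume A: "A \<in> sets (distr (M \<Otimes>\<^sub>M N) N snd)"
    then have "emeasure (distr (M \<Otimes>\<^sub>M N) N snd) A = emeasure (M \<Otimes>\<^sub>M N) (space M \<times> A)"
      by (auto simp: emeasure_distr space_pair_measure dest: sets.sets_into_space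
          intro!: arg_cong2[where f=emeasure])
    with A show "emeasure (distr (M \<Otimes>\<^sub>M N) N snd) A = emeasure N A"
      using emeasure_space_1 by (simp add: N.emeasure_pair_measure_Times)
  qed simp
qed

lemma prob_space_std_gaussian: "prob_space std_gaussian"
  unfolding std_gaussian_def by (rule prob_space_normal_density) simp

lemma sets_std_gaussian [simp, measurable_cong]: "sets std_gaussian = sets borel"
  unfolding std_gaussian_def by simp

lemma space_std_gaussian [simp]: "space std_gaussian = UNIV"
  unfolding std_gaussian_def by simp

interpretation std_gaussian: prob_space std_gaussian
  by (rule prob_space_std_gaussian)

lemma std_gaussian_moment:
  "integrable std_gaussian (\<lambda>z. z ^ k)" "integrable std_gaussian (\<lambda>z. \<bar>z\<bar> ^ k)"
  "(\<integral>z. z \<partial>std_gaussian) = 0" "(\<integral>z. z\<^sup>2 \<partial>std_gaussian) = 1"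
  unfolding std_gaussian_def
  using integrable_std_normal_moment[of k] integrable_std_normal_moment_abs[of k]
    integral_std_normal_moment_odd[of 0] integral_std_normal_moment_even[of 1]
  by (simp_all add: integrable_density integral_density)

lemma std_gaussian_rotation:
  fixes a b :: real
  assumes "a \<ge> 0" "b \<ge> 0" "a\<^sup>2 + b\<^sup>2 = 1"
  shows "distr (std_gaussian \<Otimes>\<^sub>M std_gaussian) std_gaussian (\<lambda>w. a * fst w + b * snd w) = std_gaussian"
proof -
  let ?N = std_gaussian and ?M = "std_gaussian \<Otimes>\<^sub>M std_gaussian"
  interpret N2: pair_prob_space ?N ?N ..
  have fst: "distr ?M ?N fst = ?N" by (rule std_gaussian.distr_pair_fst)
  have snd: "distr ?M ?N snd = ?N"
    by (rule std_gaussian.distr_pair_snd) (rule std_gaussian.sigma_finite_measure_axioms)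
  consider "a = 0" | "b = 0" | "a > 0" "b > 0" using assms by force
  then show ?thesis
  proof cases
    case 1
    then show ?thesis using assms snd by (simp add: power2_eq_1_iff)
  next
    case 2
    then show ?thesis using assms fst by (simp add: power2_eq_1_iff)
  next
    case 3
    have lborel: "distr ?M lborel g = distr ?M ?N g" for g
      by (rule distr_cong) auto
    have "N2.P.indep_var ?N fst ?N snd"
      unfolding N2.P.indep_var_distribution_eq using fst snd by (simp add: distr_id)
    then have "N2.P.indep_var borel ((*) a \<circ> fst) borel ((*) b \<circ> snd)"
      by (rule N2.P.indep_var_compose) auto
    moreover have "distributed ?M lborel fst std_normal_density"
      "distributed ?M lborel snd std_normal_density"
      unfolding distributed_def lborel fst snd by (auto simp: std_gaussian_def)
    then have "distributed ?M lborel (\<lambda>x. a * fst x) (normal_density 0 a)"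
      "distributed ?M lborel (\<lambda>x. b * snd x) (normal_density 0 b)"
      using N2.P.normal_density_affine[where \<alpha>=a and \<beta>=0 and X=fst and \<mu>=0 and \<sigma>=1]
        N2.P.normal_density_affine[where \<alpha>=b and \<beta>=0 and X=snd and \<mu>=0 and \<sigma>=1] 3
      by simp_all
    ultimately have "distributed ?M lborel (\<lambda>x. a * fst x + b * snd x) (normal_density (0 + 0) (sqrt (a\<^sup>2 + b\<^sup>2)))"
      using 3 by (intro N2.P.add_indep_normal) (auto simp: o_def)
    then show ?thesis
      using assms lborel unfolding distributed_def std_gaussian_def by simp
  qed
qed

lemma std_gaussian_integral_rotation:
  fixes f :: "real \<Rightarrow> real" and a b :: real
  assumes [measurable]: "f \<in> borel_measurable borel" and "integrable std_gaussian f"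
    and "a \<ge> 0" "b \<ge> 0" "a\<^sup>2 + b\<^sup>2 = 1"
  shows "integrable (std_gaussian \<Otimes>\<^sub>M std_gaussian) (\<lambda>w. f (a * fst w + b * snd w))"
    and "(\<integral>z. f z \<partial>std_gaussian) = (\<integral>z1. (\<integral>z2. f (a * z1 + b * z2) \<partial>std_gaussian) \<partial>std_gaussian)"
proof -
  let ?N = std_gaussian and ?M = "std_gaussian \<Otimes>\<^sub>M std_gaussian"
  interpret N2: pair_prob_space ?N ?N ..
  have g: "(\<lambda>w. a * fst w + b * snd w) \<in> measurable ?M ?N" by measurable
  note rot = std_gaussian_rotation[OF assms(3-5)]
  show int: "integrable ?M (\<lambda>w. f (a * fst w + b * snd w))"
    using integrable_distr_eq[OF g, of f] assms(2) rot by simp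
  have "(\<integral>z. f z \<partial>?N) = (\<integral>w. f (a * fst w + b * snd w) \<partial>?M)"
    using integral_distr[OF g, of f] rot by simp
  also have "\<dots> = (\<integral>z1. (\<integral>z2. f (a * z1 + b * z2) \<partial>?N) \<partial>?N)"
    using N2.integral_fst[of "\<lambda>z1 z2. f (a * z1 + b * z2)"] int by (simp add: split_beta')
  finally show "(\<integral>z. f z \<partial>?N) = (\<integral>z1. (\<integral>z2. f (a * z1 + b * z2) \<partial>?N) \<partial>?N)" .
qed

lemma (in prob_space) expectation_le_ln_expectation_exp:
  fixes f :: "'a \<Rightarrow> real"
  assumes [measurable]: "f \<in> borel_measurable M" and bound: "\<And>x. x \<in> space M \<Longrightarrow> \<bar>f x\<bar> \<le> B"
  shows "expectation f \<le> ln (expectation (\<lambda>x. exp (f x)))"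
proof -
  have "integrable M f"
    using bound by (intro integrable_const_bound[where B=B] AE_I2) auto
  moreover have "integrable M (\<lambda>x. exp (f x))"
    using bound by (intro integrable_const_bound[where B="exp B"] AE_I2) (auto simp: abs_le_iff)
  ultimately have "exp (expectation f) \<le> expectation (\<lambda>x. exp (f x))"
    using jensens_inequality[OF _ _ _ _ exp_convex] by simp
  moreover have "0 < exp (expectation f)" by simp
  ultimately show ?thesis
    by (metis ln_exp ln_le_cancel_iff order_less_le_trans)
qed

lemma (in prob_space) expectation_exp_le_hoeffding:
  fixes f :: "'a \<Rightarrow> real"
  assumes [measurable]: "f \<in> borel_measurable M" and bound: "\<And>x. x \<in> space M \<Longrightarrow> \<bar>f x\<bar> \<le> K"
  shows "expectation (\<lambda>x. exp (l * f x)) \<le> exp (l * expectation f + l\<^sup>2 * K\<^sup>2 / 2)"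
proof -
  have pos: "expectation (\<lambda>x. exp (l * g x)) \<le> exp (l * expectation g + l\<^sup>2 * K\<^sup>2 / 2)"
    if "l > 0" and [measurable]: "g \<in> borel_measurable M" and g: "\<And>x. x \<in> space M \<Longrightarrow> \<bar>g x\<bar> \<le> K"
    for l g
  proof -
    have "g x \<in> {- K..K}" if "x \<in> space M" for x
      using g[OF that] by (auto simp: abs_le_iff)
    then have "AE x in M. g x \<in> {- K..K}"
      by (intro AE_I2)
    then interpret interval_bounded_random_variable M g "- K" K
      by unfold_locales auto
    define c where "c = expectation g"
    have "- K \<le> c" "c \<le> K"
      unfolding c_def using AE_in_interval
      by (auto intro!: integral_ge_const integral_le_const elim: eventually_mono)
    then have "\<bar>c\<bar> \<le> K" by simp
    then have "l * (g x - c) \<le> l * (2 * K)" if "x \<in> space M" for x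
      using g[OF that] \<open>l > 0\<close> by (intro mult_left_mono) (auto simp: abs_le_iff)
    then have "integrable M (\<lambda>x. exp (l * (g x - c)))"
      by (intro integrable_const_bound[where B="exp (l * (2 * K))"] AE_I2) auto
    then have "ennreal (expectation (\<lambda>x. exp (l * (g x - c))))
        = nn_integral M (\<lambda>x. ennreal (exp (l * (g x - c))))"
      by (intro nn_integral_eq_integral[symmetric]) auto
    also have "\<dots> \<le> ennreal (exp (l\<^sup>2 * (K - - K)\<^sup>2 / 8))"
      unfolding c_def by (rule Hoeffdings_lemma_nn_integral[OF \<open>l > 0\<close>])
    finally have "expectation (\<lambda>x. exp (l * (g x - c))) \<le> exp (l\<^sup>2 * K\<^sup>2 / 2)"
      by (simp add: power2_eq_square algebra_simps)
    moreover have "exp (l * g x) = exp (l * c) * exp (l * (g x - c))" for x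
      by (simp add: mult_exp_exp algebra_simps)
    ultimately show ?thesis
      unfolding c_def[symmetric] by (simp add: exp_add mult_left_mono)
  qed
  consider "l > 0" | "l = 0" | "l < 0" by linarith
  then show ?thesis
  proof cases
    case 3
    have "\<bar>- f x\<bar> \<le> K" if "x \<in> space M" for x using bound[OF that] by simp
    then show ?thesis using pos[of "- l" "\<lambda>x. - f x"] 3 by simp
  qed (use pos[OF _ _ bound] prob_space in auto)
qed

definition gibbs :: "'a measure \<Rightarrow> ('a \<Rightarrow> real) \<Rightarrow> 'a measure" where
  "gibbs M w = density M (\<lambda>x. ennreal (w x / (\<integral>y. w y \<partial>M)))"

lemma (in prob_space)
  assumes [measurable]: "w \<in> borel_measurable M"
    and bounds: "c > 0" "\<And>x. x \<in> space M \<Longrightarrow> c \<le> w x" "\<And>x. x \<in> space M \<Longrightarrow> w x \<le> C"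
  shows prob_space_gibbs: "prob_space (gibbs M w)"
    and integral_gibbs: "\<And>f. f \<in> borel_measurable M \<Longrightarrow>
      (\<integral>x. f x \<partial>gibbs M w) = (\<integral>x. w x * f x \<partial>M) / (\<integral>x. w x \<partial>M)"
proof -
  have "\<bar>w x\<bar> \<le> C" if "x \<in> space M" for x
    using bounds(1) bounds(2)[OF that] bounds(3)[OF that] by simp
  then have int: "integrable M w"
    by (intro integrable_const_bound[where B=C] AE_I2) auto
  have "c \<le> (\<integral>x. w x \<partial>M)"
    using integral_mono[OF integrable_const int, of c] bounds prob_space by auto
  then have Z: "(\<integral>x. w x \<partial>M) > 0" using bounds(1) by linarith
  have nonneg: "0 \<le> w x / (\<integral>y. w y \<partial>M)" if "x \<in> space M" for x
    using bounds(1) bounds(2)[OF that] Z by simp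
  show "(\<integral>x. f x \<partial>gibbs M w) = (\<integral>x. w x * f x \<partial>M) / (\<integral>x. w x \<partial>M)"
    if [measurable]: "f \<in> borel_measurable M" for f
  proof -
    have "(\<integral>x. f x \<partial>gibbs M w) = (\<integral>x. w x * f x / (\<integral>y. w y \<partial>M) \<partial>M)"
      unfolding gibbs_def using nonneg by (subst integral_density) (auto intro!: AE_I2)
    then show ?thesis by simp
  qed
  show "prob_space (gibbs M w)"
  proof (rule prob_spaceI)
    have "emeasure (gibbs M w) (space (gibbs M w)) = (\<integral>\<^sup>+ x. ennreal (w x / (\<integral>y. w y \<partial>M)) \<partial>M)"
      unfolding gibbs_def by (subst emeasure_density) (auto intro!: nn_integral_cong)
    also have "\<dots> = ennreal (\<integral>x. w x / (\<integral>y. w y \<partial>M) \<partial>M)"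
      using nonneg int by (intro nn_integral_eq_integral) (auto intro!: AE_I2)
    finally show "emeasure (gibbs M w) (space (gibbs M w)) = 1" using Z by simp
  qed
qed

lemma integrable_between:
  fixes f g h :: "'a \<Rightarrow> real"
  assumes [measurable]: "f \<in> borel_measurable M" and "integrable M g" "integrable M h"
    and "\<And>x. g x \<le> f x" "\<And>x. f x \<le> h x"
  shows "integrable M f"
proof (rule Bochner_Integration.integrable_bound[where f="\<lambda>x. \<bar>g x\<bar> + \<bar>h x\<bar>"])
  have "norm (f x) \<le> norm (\<bar>g x\<bar> + \<bar>h x\<bar>)" for x
    using assms(4,5)[of x] by (simp add: abs_le_iff abs_if)
  then show "AE x in M. norm (f x) \<le> norm (\<bar>g x\<bar> + \<bar>h x\<bar>)" by simp
qed (use assms in auto)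

lemma sets_gibbs [simp, measurable_cong]: "sets (gibbs M w) = sets M"
  and space_gibbs [simp]: "space (gibbs M w) = space M"
  unfolding gibbs_def by simp_all

locale bounded_prior =
  fixes P :: "real measure" and K :: real
  assumes prob_space_P: "prob_space P" and sets_P [measurable_cong]: "sets P = sets borel"
    and K_nonneg: "K \<ge> 0" and support: "AE x in P. \<bar>x\<bar> \<le> K"
begin

sublocale prob_space P by (fact prob_space_P)

lemma space_P [simp]: "space P = UNIV"
  using sets_eq_imp_space_eq[OF sets_P] by simp

text \<open>The prior is bounded only almost surely, so integrands are evaluated at \<open>x\<close> clipped to
  \<open>[-K, K]\<close>: this changes no integral against \<open>P\<close> and makes all integrands bounded everywhere.\<close>

definition clip :: "real \<Rightarrow> real" where
  "clip x = max (- K) (min K x)"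

lemma clip_measurable [measurable]: "clip \<in> borel_measurable borel"
  unfolding clip_def by measurable

lemma abs_clip_le: "\<bar>clip x\<bar> \<le> K"
  using K_nonneg unfolding clip_def by auto

lemma AE_clip_eq: "AE x in P. clip x = x"
  using support by (rule eventually_mono) (auto simp: clip_def)

lemma clip_overlap_bounds:
  "\<bar>clip x * xb - (clip x)\<^sup>2 / 2\<bar> \<le> K * \<bar>xb\<bar> + K\<^sup>2 / 2" "clip x * xb - (clip x)\<^sup>2 / 2 \<le> K * \<bar>xb\<bar>"
  "- (K * \<bar>xb\<bar> + K\<^sup>2 / 2) \<le> clip x * xb - (clip x)\<^sup>2 / 2"
proof -
  have "\<bar>clip x * xb\<bar> \<le> K * \<bar>xb\<bar>"
    using abs_clip_le[of x] by (simp add: abs_mult mult_right_mono)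
  moreover have "(clip x)\<^sup>2 \<le> K\<^sup>2"
    using power_mono[OF abs_clip_le[of x] abs_ge_zero, where n=2] by simp
  moreover have "0 \<le> (clip x)\<^sup>2" by simp
  ultimately show "\<bar>clip x * xb - (clip x)\<^sup>2 / 2\<bar> \<le> K * \<bar>xb\<bar> + K\<^sup>2 / 2"
    "clip x * xb - (clip x)\<^sup>2 / 2 \<le> K * \<bar>xb\<bar>"
    "- (K * \<bar>xb\<bar> + K\<^sup>2 / 2) \<le> clip x * xb - (clip x)\<^sup>2 / 2"
    by (simp_all only: abs_le_iff) linarith+
qed

definition energy :: "real \<Rightarrow> real \<Rightarrow> real \<Rightarrow> real \<Rightarrow> real" where
  "energy h xb z x = sqrt h * z * clip x + h * clip x * xb - h / 2 * (clip x)\<^sup>2"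

definition energy_bound :: "real \<Rightarrow> real \<Rightarrow> real \<Rightarrow> real" where
  "energy_bound h xb z = sqrt h * \<bar>z\<bar> * K + h * (K * \<bar>xb\<bar> + K\<^sup>2 / 2)"

definition partition_fn :: "real \<Rightarrow> real \<Rightarrow> real \<Rightarrow> real" where
  "partition_fn h xb z = (\<integral>x. exp (energy h xb z x) \<partial>P)"

lemma energy_measurable [measurable]: "(\<lambda>x. energy h xb z x) \<in> borel_measurable borel"
  unfolding energy_def by measurable

lemma abs_energy_le: "h \<ge> 0 \<Longrightarrow> \<bar>energy h xb z x\<bar> \<le> energy_bound h xb z"
proof -
  assume "h \<ge> 0"
  have "\<bar>sqrt h * z * clip x\<bar> \<le> sqrt h * \<bar>z\<bar> * K"
    using abs_clip_le[of x] \<open>h \<ge> 0\<close> by (simp add: abs_mult mult_left_mono)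
  moreover have "\<bar>h * (clip x * xb - (clip x)\<^sup>2 / 2)\<bar> \<le> h * (K * \<bar>xb\<bar> + K\<^sup>2 / 2)"
    using clip_overlap_bounds(1)[of x xb] \<open>h \<ge> 0\<close> by (simp add: abs_mult mult_left_mono)
  ultimately show ?thesis
    unfolding energy_def energy_bound_def by (simp add: algebra_simps abs_le_iff)
qed

lemma partition_fn_bounds:
  assumes "h \<ge> 0"
  shows "exp (- energy_bound h xb z) \<le> partition_fn h xb z" "partition_fn h xb z \<le> exp (energy_bound h xb z)"
proof -
  have lo: "- energy_bound h xb z \<le> energy h xb z x" and up: "energy h xb z x \<le> energy_bound h xb z" for x
    using abs_energy_le[OF assms, of xb z x] by (simp_all add: abs_le_iff)
  have "random_variable borel (\<lambda>x. exp (energy h xb z x))" by measurable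
  then have "integrable P (\<lambda>x. exp (energy h xb z x))"
    by (intro integrable_const_bound[where B="exp (energy_bound h xb z)"] AE_I2) (simp_all add: up)
  then show "exp (- energy_bound h xb z) \<le> partition_fn h xb z" "partition_fn h xb z \<le> exp (energy_bound h xb z)"
    unfolding partition_fn_def by (auto intro!: integral_ge_const integral_le_const AE_I2 simp: lo up)
qed

lemma partition_fn_pos: "h \<ge> 0 \<Longrightarrow> partition_fn h xb z > 0"
  using partition_fn_bounds(1) by (rule less_le_trans[OF exp_gt_zero])

lemma abs_ln_partition_fn_le:
  assumes "h \<ge> 0"
  shows "\<bar>ln (partition_fn h xb z)\<bar> \<le> energy_bound h xb z"
proof -
  have "ln (exp (- energy_bound h xb z)) \<le> ln (partition_fn h xb z)"
    "ln (partition_fn h xb z) \<le> ln (exp (energy_bound h xb z))"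
    using partition_fn_bounds[OF assms] partition_fn_pos[OF assms] by (simp_all only: ln_le_cancel_iff exp_gt_zero)
  then show ?thesis by (simp add: abs_le_iff)
qed

lemma partition_fn_measurable [measurable]:
  "(\<lambda>w. partition_fn h (fst w) (snd w)) \<in> borel_measurable (borel \<Otimes>\<^sub>M borel)"
proof -
  have "(\<lambda>(w, x). exp (energy h (fst w) (snd w) x)) \<in> borel_measurable ((borel \<Otimes>\<^sub>M borel) \<Otimes>\<^sub>M P)"
    unfolding energy_def split_beta' by measurable
  then show ?thesis
    unfolding partition_fn_def by (rule borel_measurable_lebesgue_integral)
qed

lemma integrable_energy_bound:
  "integrable std_gaussian (\<lambda>z. energy_bound h xb z)"
  "integrable (P \<Otimes>\<^sub>M std_gaussian) (\<lambda>w. energy_bound h (fst w) (snd w))"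
proof -
  interpret PN: pair_prob_space P std_gaussian ..
  show "integrable std_gaussian (\<lambda>z. energy_bound h xb z)"
    unfolding energy_bound_def using std_gaussian_moment(2)[of 1] by simp
  have "integrable (P \<Otimes>\<^sub>M std_gaussian) (\<lambda>w. \<bar>snd w\<bar>)"
    using integrable_distr_eq[of snd "P \<Otimes>\<^sub>M std_gaussian" std_gaussian "\<lambda>z. \<bar>z\<bar>"]
      distr_pair_snd[OF std_gaussian.sigma_finite_measure_axioms] std_gaussian_moment(2)[of 1] by simp
  moreover have "integrable P (\<lambda>x. \<bar>x\<bar>)"
    using support by (intro integrable_const_bound[where B=K]) auto
  then have "integrable (P \<Otimes>\<^sub>M std_gaussian) (\<lambda>w. \<bar>fst w\<bar>)"
    using integrable_distr_eq[of fst "P \<Otimes>\<^sub>M std_gaussian" P "\<lambda>z. \<bar>z\<bar>"]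
      std_gaussian.distr_pair_fst[of P] by simp
  ultimately show "integrable (P \<Otimes>\<^sub>M std_gaussian) (\<lambda>w. energy_bound h (fst w) (snd w))"
    unfolding energy_bound_def by simp
qed

lemma partition_fn_measurable_z [measurable]: "(\<lambda>z. partition_fn h xb z) \<in> borel_measurable borel"
proof -
  have "(\<lambda>z. (\<lambda>w. partition_fn h (fst w) (snd w)) (xb, z)) \<in> borel_measurable borel"
    by (rule measurable_compose[OF _ partition_fn_measurable]) simp
  then show ?thesis by simp
qed

lemma integrable_ln_partition_fn:
  assumes "h \<ge> 0"
  shows "integrable std_gaussian (\<lambda>z. ln (partition_fn h xb z))"
    and "integrable (P \<Otimes>\<^sub>M std_gaussian) (\<lambda>w. ln (partition_fn h (fst w) (snd w)))"
proof -
  have bound: "\<bar>ln (partition_fn h xb z)\<bar> \<le> \<bar>energy_bound h xb z\<bar>" for xb z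
    using abs_ln_partition_fn_le[OF assms, of xb z] by simp
  show "integrable std_gaussian (\<lambda>z. ln (partition_fn h xb z))"
    by (rule Bochner_Integration.integrable_bound[OF integrable_energy_bound(1)[of h xb]])
      (auto intro!: AE_I2 bound)
  show "integrable (P \<Otimes>\<^sub>M std_gaussian) (\<lambda>w. ln (partition_fn h (fst w) (snd w)))"
    by (rule Bochner_Integration.integrable_bound[OF integrable_energy_bound(2)[of h]])
      (auto intro!: AE_I2 bound)
qed

lemma psi_eq_partition_fn: "psi P h = (\<integral>w. ln (partition_fn h (fst w) (snd w)) \<partial>(P \<Otimes>\<^sub>M std_gaussian))"
proof -
  have "(\<integral>x. exp (sqrt h * snd w * x + h * x * fst w - h / 2 * x\<^sup>2) \<partial>P) = partition_fn h (fst w) (snd w)"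
    for w :: "real \<times> real"
    unfolding partition_fn_def energy_def
    by (rule integral_cong_AE) (use AE_clip_eq in \<open>auto elim!: eventually_mono simp: algebra_simps\<close>)
  then show ?thesis unfolding psi_def by simp
qed

definition free_energy :: "real \<Rightarrow> real \<Rightarrow> real" where
  "free_energy h xb = (\<integral>z. ln (partition_fn h xb z) \<partial>std_gaussian)"

lemma psi_eq_free_energy:
  assumes "h \<ge> 0"
  shows "psi P h = (\<integral>xb. free_energy h xb \<partial>P)" and "integrable P (free_energy h)"
proof -
  interpret PN: pair_prob_space P std_gaussian ..
  have I: "integrable (P \<Otimes>\<^sub>M std_gaussian) (\<lambda>(xb, z). ln (partition_fn h xb z))"
    using integrable_ln_partition_fn(2)[OF assms] by (simp add: split_beta')
  show "psi P h = (\<integral>xb. free_energy h xb \<partial>P)"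
    unfolding psi_eq_partition_fn free_energy_def using PN.integral_fst[OF I] by (simp add: split_beta')
  show "integrable P (free_energy h)"
    unfolding free_energy_def using PN.integrable_fst[OF I] by simp
qed

definition posterior :: "real \<Rightarrow> real \<Rightarrow> real \<Rightarrow> real measure" where
  "posterior h xb z = gibbs P (\<lambda>x. exp (energy h xb z x))"

lemma
  assumes "h \<ge> 0"
  shows prob_space_posterior: "prob_space (posterior h xb z)"
    and integral_posterior: "\<And>f. f \<in> borel_measurable borel \<Longrightarrow>
      (\<integral>x. f x \<partial>posterior h xb z) = (\<integral>x. exp (energy h xb z x) * f x \<partial>P) / partition_fn h xb z"
proof -
  have m: "(\<lambda>x. exp (energy h xb z x)) \<in> borel_measurable P" by measurable
  have lo: "exp (- energy_bound h xb z) \<le> exp (energy h xb z x)"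
    and up: "exp (energy h xb z x) \<le> exp (energy_bound h xb z)" for x
    using abs_energy_le[OF assms, of xb z x] by (simp_all add: abs_le_iff)
  show "prob_space (posterior h xb z)"
    unfolding posterior_def by (rule prob_space_gibbs[OF m exp_gt_zero lo up])
  show "(\<integral>x. f x \<partial>posterior h xb z) = (\<integral>x. exp (energy h xb z x) * f x \<partial>P) / partition_fn h xb z"
    if "f \<in> borel_measurable borel" for f
    unfolding posterior_def partition_fn_def using that
    by (intro integral_gibbs[OF m exp_gt_zero lo up]) simp_all
qed

lemma sets_posterior [simp, measurable_cong]: "sets (posterior h xb z) = sets borel"
  and space_posterior [simp]: "space (posterior h xb z) = UNIV"
  unfolding posterior_def by (simp_all add: sets_P)

text \<open>Splitting the Gaussian field at \<open>h + D\<close> into its parts at \<open>h\<close> and at \<open>D\<close> expresses the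
  partition function at \<open>h + D\<close> as a posterior average at \<open>h\<close>.\<close>

lemma partition_fn_interpolation:
  assumes "h \<ge> 0" "D \<ge> 0" and z: "sqrt (h + D) * z' = sqrt h * z + sqrt D * y"
  shows "partition_fn (h + D) xb z' = partition_fn h xb z *
    (\<integral>x. exp (sqrt D * y * clip x + D * (clip x * xb - (clip x)\<^sup>2 / 2)) \<partial>posterior h xb z)"
proof -
  define Y where "Y x = sqrt D * y * clip x + D * (clip x * xb - (clip x)\<^sup>2 / 2)" for x
  have "sqrt (h + D) * z' * clip x = sqrt h * z * clip x + sqrt D * y * clip x" for x
    using z by (simp add: distrib_right[symmetric])
  then have "energy (h + D) xb z' x = energy h xb z x + Y x" for x
    unfolding energy_def Y_def by (simp add: algebra_simps)
  then have "partition_fn (h + D) xb z' = (\<integral>x. exp (energy h xb z x) * exp (Y x) \<partial>P)"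
    unfolding partition_fn_def by (simp add: exp_add)
  also have "\<dots> = partition_fn h xb z * (\<integral>x. exp (Y x) \<partial>posterior h xb z)"
    using integral_posterior[OF assms(1), of "\<lambda>x. exp (Y x)"] partition_fn_pos[OF assms(1), of xb z]
    unfolding Y_def by simp
  finally show ?thesis unfolding Y_def .
qed

lemma ln_partition_fn_interpolation:
  fixes xb :: real
  assumes "h \<ge> 0" "D \<ge> 0" and z: "sqrt (h + D) * z' = sqrt h * z + sqrt D * y"
  defines "m \<equiv> (\<integral>x. clip x \<partial>posterior h xb z)"
  shows "ln (partition_fn h xb z) + sqrt D * y * m - D * (K * \<bar>xb\<bar> + K\<^sup>2 / 2) \<le> ln (partition_fn (h + D) xb z')"
    and "ln (partition_fn (h + D) xb z') \<le> ln (partition_fn h xb z) + sqrt D * y * m + D * K * \<bar>xb\<bar> + D * y\<^sup>2 * K\<^sup>2 / 2"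
proof -
  interpret post: prob_space "posterior h xb z" by (rule prob_space_posterior[OF assms(1)])
  define Y where "Y x = sqrt D * y * clip x + D * (clip x * xb - (clip x)\<^sup>2 / 2)" for x
  define B where "B = sqrt D * \<bar>y\<bar> * K + D * (K * \<bar>xb\<bar> + K\<^sup>2 / 2)"
  have Y_bound: "\<bar>Y x\<bar> \<le> B" for x
  proof -
    have "\<bar>sqrt D * y * clip x\<bar> \<le> sqrt D * \<bar>y\<bar> * K"
      using abs_clip_le[of x] assms(2) by (simp add: abs_mult mult_left_mono)
    moreover have "\<bar>D * (clip x * xb - (clip x)\<^sup>2 / 2)\<bar> \<le> D * (K * \<bar>xb\<bar> + K\<^sup>2 / 2)"
      using clip_overlap_bounds(1)[of x xb] assms(2) by (simp add: abs_mult mult_left_mono)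
    ultimately show ?thesis unfolding Y_def B_def by linarith
  qed
  have Z: "partition_fn (h + D) xb z' = partition_fn h xb z * post.expectation (\<lambda>x. exp (Y x))"
    unfolding Y_def by (rule partition_fn_interpolation[OF assms(1-3)])
  have "post.expectation (\<lambda>x. exp (Y x)) > 0"
    using Z partition_fn_pos[OF assms(1), of xb z] partition_fn_pos[of "h + D" xb z'] assms(1,2)
    by (simp add: zero_less_mult_iff)
  then have ln_Z: "ln (partition_fn (h + D) xb z') = ln (partition_fn h xb z) + ln (post.expectation (\<lambda>x. exp (Y x)))"
    using Z partition_fn_pos[OF assms(1), of xb z] by (simp add: ln_mult)
  have int: "integrable (posterior h xb z) f"
    if [measurable]: "f \<in> borel_measurable borel" and "\<And>x. \<bar>f x\<bar> \<le> c" for f :: "real \<Rightarrow> real" and c :: real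
    using that(2) by (intro post.integrable_const_bound[where B=c] AE_I2) auto
  have overlap: "(\<lambda>x. clip x * xb - (clip x)\<^sup>2 / 2) \<in> borel_measurable borel" by measurable
  have "post.expectation Y = sqrt D * y * m + D * post.expectation (\<lambda>x. clip x * xb - (clip x)\<^sup>2 / 2)"
    unfolding Y_def m_def
    using int[OF clip_measurable abs_clip_le] int[OF overlap clip_overlap_bounds(1)] by simp
  moreover have "D * (- (K * \<bar>xb\<bar> + K\<^sup>2 / 2)) \<le> D * post.expectation (\<lambda>x. clip x * xb - (clip x)\<^sup>2 / 2)"
    by (intro mult_left_mono post.integral_ge_const AE_I2 clip_overlap_bounds(3)
        int[OF overlap clip_overlap_bounds(1)] assms(2))
  moreover have "post.expectation Y \<le> ln (post.expectation (\<lambda>x. exp (Y x)))"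
    using Y_bound unfolding Y_def by (intro post.expectation_le_ln_expectation_exp) auto
  ultimately show "ln (partition_fn h xb z) + sqrt D * y * m - D * (K * \<bar>xb\<bar> + K\<^sup>2 / 2) \<le> ln (partition_fn (h + D) xb z')"
    unfolding ln_Z by (simp add: algebra_simps)
  define l where "l = sqrt D * y"
  have Y_le: "exp (Y x) \<le> exp (D * K * \<bar>xb\<bar>) * exp (l * clip x)" for x
  proof -
    have "D * (clip x * xb - (clip x)\<^sup>2 / 2) \<le> D * (K * \<bar>xb\<bar>)"
      using clip_overlap_bounds(2) assms(2) by (rule mult_left_mono)
    then show ?thesis unfolding Y_def l_def by (simp add: mult_exp_exp algebra_simps)
  qed
  have "\<bar>l * clip x\<bar> \<le> \<bar>l\<bar> * K" for x
    using abs_clip_le[of x] by (simp add: abs_mult mult_left_mono)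
  then have int_exp_clip: "integrable (posterior h xb z) (\<lambda>x. exp (l * clip x))"
    by (intro int[of _ "exp (\<bar>l\<bar> * K)"]) (auto simp: abs_le_iff)
  have "integrable (posterior h xb z) (\<lambda>x. exp (Y x))"
    using Y_bound unfolding Y_def by (intro int[of _ "exp B"]) (auto simp: abs_le_iff)
  then have "post.expectation (\<lambda>x. exp (Y x)) \<le> exp (D * K * \<bar>xb\<bar>) * post.expectation (\<lambda>x. exp (l * clip x))"
    using integral_mono[OF _ _ Y_le] int_exp_clip by simp
  also have "\<dots> \<le> exp (D * K * \<bar>xb\<bar>) * exp (l * m + l\<^sup>2 * K\<^sup>2 / 2)"
    unfolding m_def by (intro mult_left_mono post.expectation_exp_le_hoeffding abs_clip_le) auto
  finally have "ln (post.expectation (\<lambda>x. exp (Y x)))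
      \<le> ln (exp (D * K * \<bar>xb\<bar>) * exp (l * m + l\<^sup>2 * K\<^sup>2 / 2))"
    using \<open>post.expectation (\<lambda>x. exp (Y x)) > 0\<close> by (rule ln_mono)
  then have "ln (post.expectation (\<lambda>x. exp (Y x))) \<le> D * K * \<bar>xb\<bar> + (l * m + l\<^sup>2 * K\<^sup>2 / 2)"
    by (simp add: ln_mult)
  then show "ln (partition_fn (h + D) xb z') \<le> ln (partition_fn h xb z) + sqrt D * y * m + D * K * \<bar>xb\<bar> + D * y\<^sup>2 * K\<^sup>2 / 2"
    unfolding ln_Z l_def using assms(2) by (simp add: power_mult_distrib algebra_simps)
qed

lemma std_gaussian_integral_quadratic:
  "(\<integral>z. c0 + c1 * z + c2 * z\<^sup>2 \<partial>std_gaussian) = c0 + c2"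
  "integrable std_gaussian (\<lambda>z. c0 + c1 * z + c2 * z\<^sup>2)"
  using std_gaussian_moment(1)[of 1] std_gaussian_moment(1)[of 2] std_gaussian_moment(3,4)
    std_gaussian.prob_space by simp_all

text \<open>Averaging the interpolation bounds over the independent Gaussian \<open>y\<close> removes the linear term
  and turns \<open>y\<^sup>2\<close> into \<open>1\<close>.\<close>

lemma gaussian_average_ln_partition_fn:
  assumes "h \<ge> 0" "D \<ge> 0" and z: "\<And>y. sqrt (h + D) * f y = sqrt h * z + sqrt D * y"
    and [measurable]: "f \<in> borel_measurable borel"
  shows "integrable std_gaussian (\<lambda>y. ln (partition_fn (h + D) xb (f y)))"
    and "\<bar>(\<integral>y. ln (partition_fn (h + D) xb (f y)) \<partial>std_gaussian) - ln (partition_fn h xb z)\<bar>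
      \<le> D * (K * \<bar>xb\<bar> + K\<^sup>2 / 2)"
proof -
  define m where "m = (\<integral>x. clip x \<partial>posterior h xb z)"
  define L where "L = ln (partition_fn h xb z)"
  note bounds = ln_partition_fn_interpolation[OF assms(1,2) z, of xb, folded m_def L_def]
  note lower = std_gaussian_integral_quadratic[of "L - D * (K * \<bar>xb\<bar> + K\<^sup>2 / 2)" "sqrt D * m" 0]
  note upper = std_gaussian_integral_quadratic[of "L + D * K * \<bar>xb\<bar>" "sqrt D * m" "D * K\<^sup>2 / 2"]
  have lo: "L - D * (K * \<bar>xb\<bar> + K\<^sup>2 / 2) + sqrt D * m * y + 0 * y\<^sup>2 \<le> ln (partition_fn (h + D) xb (f y))"
    and up: "ln (partition_fn (h + D) xb (f y)) \<le> L + D * K * \<bar>xb\<bar> + sqrt D * m * y + D * K\<^sup>2 / 2 * y\<^sup>2"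
    for y
  proof -
    have "sqrt D * y * m = sqrt D * m * y" "D * y\<^sup>2 * K\<^sup>2 / 2 = D * K\<^sup>2 / 2 * y\<^sup>2"
      by (simp_all add: ac_simps)
    then show "L - D * (K * \<bar>xb\<bar> + K\<^sup>2 / 2) + sqrt D * m * y + 0 * y\<^sup>2 \<le> ln (partition_fn (h + D) xb (f y))"
      "ln (partition_fn (h + D) xb (f y)) \<le> L + D * K * \<bar>xb\<bar> + sqrt D * m * y + D * K\<^sup>2 / 2 * y\<^sup>2"
      using bounds[of y] by linarith+
  qed
  show int: "integrable std_gaussian (\<lambda>y. ln (partition_fn (h + D) xb (f y)))"
    by (rule integrable_between[OF _ lower(2) upper(2) lo up]) measurable
  have "L - D * (K * \<bar>xb\<bar> + K\<^sup>2 / 2) \<le> (\<integral>y. ln (partition_fn (h + D) xb (f y)) \<partial>std_gaussian)"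
    using integral_mono[OF lower(2) int lo] lower(1) by linarith
  moreover have "D * K * \<bar>xb\<bar> + D * K\<^sup>2 / 2 = D * (K * \<bar>xb\<bar> + K\<^sup>2 / 2)"
    by (simp add: algebra_simps)
  then have "(\<integral>y. ln (partition_fn (h + D) xb (f y)) \<partial>std_gaussian) \<le> L + D * (K * \<bar>xb\<bar> + K\<^sup>2 / 2)"
    using integral_mono[OF int upper(2) up] upper(1) by linarith
  ultimately show "\<bar>(\<integral>y. ln (partition_fn (h + D) xb (f y)) \<partial>std_gaussian) - ln (partition_fn h xb z)\<bar>
      \<le> D * (K * \<bar>xb\<bar> + K\<^sup>2 / 2)"
    unfolding L_def abs_le_iff by linarith
qed

lemma free_energy_lipschitz:
  assumes "0 \<le> h" "h \<le> h'"
  shows "\<bar>free_energy h' xb - free_energy h xb\<bar> \<le> (h' - h) * (K * \<bar>xb\<bar> + K\<^sup>2 / 2)"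
proof (cases "h' = 0")
  case False
  interpret N2: pair_prob_space std_gaussian std_gaussian ..
  define D where "D = h' - h"
  define a b where "a = sqrt (h / h')" and "b = sqrt (D / h')"
  have "h' > 0" "D \<ge> 0" "h' = h + D" using assms False unfolding D_def by auto
  then have ab: "a \<ge> 0" "b \<ge> 0" "a\<^sup>2 + b\<^sup>2 = 1"
    using assms unfolding a_def b_def by (auto simp: add_divide_distrib[symmetric])
  have split: "sqrt (h + D) * (a * z + b * y) = sqrt h * z + sqrt D * y" for z y
    using \<open>h' > 0\<close> \<open>D \<ge> 0\<close> assms(1) \<open>h' = h + D\<close>
    by (simp add: a_def b_def real_sqrt_divide distrib_left)
  define F where "F z = (\<integral>y. ln (partition_fn h' xb (a * z + b * y)) \<partial>std_gaussian)" for z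
  have F: "\<bar>F z - ln (partition_fn h xb z)\<bar> \<le> D * (K * \<bar>xb\<bar> + K\<^sup>2 / 2)" for z
    unfolding F_def \<open>h' = h + D\<close>
    by (rule gaussian_average_ln_partition_fn(2)[OF assms(1) \<open>D \<ge> 0\<close> split]) measurable
  have int: "integrable std_gaussian (\<lambda>z. ln (partition_fn h' xb z))"
    using assms by (intro integrable_ln_partition_fn(1)) auto
  note rotation = std_gaussian_integral_rotation[OF _ int ab]
  have "integrable std_gaussian F"
    using N2.integrable_fst[of "\<lambda>z y. ln (partition_fn h' xb (a * z + b * y))"] rotation(1)
    unfolding F_def by (simp add: split_beta')
  moreover note int_h = integrable_ln_partition_fn(1)[OF assms(1), of xb]
  ultimately have "(\<integral>z. F z \<partial>std_gaussian) - free_energy h xb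
      = (\<integral>z. F z - ln (partition_fn h xb z) \<partial>std_gaussian)"
    unfolding free_energy_def by simp
  also have "\<bar>\<dots>\<bar> \<le> (\<integral>z. \<bar>F z - ln (partition_fn h xb z)\<bar> \<partial>std_gaussian)"
    by (rule integral_abs_bound)
  also have "\<dots> \<le> D * (K * \<bar>xb\<bar> + K\<^sup>2 / 2)"
    using \<open>integrable std_gaussian F\<close> int_h F by (intro std_gaussian.integral_le_const AE_I2) auto
  finally have "\<bar>(\<integral>z. F z \<partial>std_gaussian) - free_energy h xb\<bar> \<le> D * (K * \<bar>xb\<bar> + K\<^sup>2 / 2)" .
  then show ?thesis
    unfolding D_def free_energy_def using rotation(2) by (simp add: F_def)
qed (use assms in simp)

lemma psi_lipschitz_on: "(3 / 2 * K\<^sup>2)-lipschitz_on {0..} (psi P)"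
proof (rule lipschitz_onI)
  have mean_abs: "(\<integral>x. \<bar>x\<bar> \<partial>P) \<le> K" "integrable P (\<lambda>x. \<bar>x\<bar>)"
    using support by (auto intro!: integral_le_const integrable_const_bound[where B=K])
  have le: "\<bar>psi P h' - psi P h\<bar> \<le> 3 / 2 * K\<^sup>2 * (h' - h)" if "0 \<le> h" "h \<le> h'" for h h'
  proof -
    have "0 \<le> h'" using that by simp
    note int = psi_eq_free_energy(2)[OF that(1)] psi_eq_free_energy(2)[OF \<open>0 \<le> h'\<close>]
    have "psi P h' - psi P h = (\<integral>xb. free_energy h' xb - free_energy h xb \<partial>P)"
      using psi_eq_free_energy(1)[OF that(1)] psi_eq_free_energy(1)[OF \<open>0 \<le> h'\<close>] int by simp
    then have "\<bar>psi P h' - psi P h\<bar> \<le> (\<integral>xb. \<bar>free_energy h' xb - free_energy h xb\<bar> \<partial>P)"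
      using integral_abs_bound by simp
    also have "\<dots> \<le> (\<integral>xb. (h' - h) * (K * \<bar>xb\<bar> + K\<^sup>2 / 2) \<partial>P)"
      using int mean_abs(2) free_energy_lipschitz[OF that] by (intro integral_mono) auto
    also have "\<dots> = (h' - h) * (K * (\<integral>x. \<bar>x\<bar> \<partial>P) + K\<^sup>2 / 2)"
      using mean_abs(2) prob_space by simp
    also have "\<dots> \<le> (h' - h) * (K * K + K\<^sup>2 / 2)"
      using that mean_abs(1) K_nonneg by (intro mult_left_mono add_right_mono) auto
    also have "\<dots> = 3 / 2 * K\<^sup>2 * (h' - h)"
      by (simp add: power2_eq_square algebra_simps)
    finally show ?thesis .
  qed
  fix x y :: real assume "x \<in> {0..}" "y \<in> {0..}"
  then show "dist (psi P x) (psi P y) \<le> 3 / 2 * K\<^sup>2 * dist x y"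
  proof (cases "x \<le> y")
    case True
    then show ?thesis using le[of x y] \<open>x \<in> {0..}\<close> by (simp add: dist_real_def abs_minus_commute)
  next
    case False
    then show ?thesis using le[of y x] \<open>y \<in> {0..}\<close> by (simp add: dist_real_def)
  qed
qed simp

end

lemma psi_lipschitz:
  assumes "prob_space P" "sets P = sets borel" "\<exists>K. AE x in P. \<bar>x\<bar> \<le> K"
  obtains L where "L-lipschitz_on {0..} (psi P)"
proof -
  obtain K where "AE x in P. \<bar>x\<bar> \<le> K" using assms(3) by blast
  then have "AE x in P. \<bar>x\<bar> \<le> max K 0" by (rule eventually_mono) simp
  then interpret bounded_prior P "max K 0"
    by (intro bounded_prior.intro assms(1,2)) simp_all
  show ?thesis using psi_lipschitz_on that by blast
qed

theorem proposition4p3: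
  fixes P :: "real measure"
  assumes "prob_space P" and "sets P = sets borel"
    and "\<exists>K. AE x in P. \<bar>x\<bar> \<le> K"
  shows "viscosity_solution (hopf_lax P)
    \<and> (\<forall>h\<ge>0. hopf_lax P (0, h) = psi P h)
    \<and> lipschitz_in_h (hopf_lax P)
    \<and> (\<forall>g. viscosity_solution g \<and> (\<forall>h\<ge>0. g (0, h) = psi P h) \<and> lipschitz_in_h g
           \<longrightarrow> (\<forall>t\<ge>0. \<forall>h\<ge>0. g (t, h) = hopf_lax P (t, h)))"
proof -
  obtain L where "L-lipschitz_on {0..} (psi P)"
    using psi_lipschitz[OF assms] .
  then interpret lipschitz_datum "psi P" L
    by (rule lipschitz_datum.intro)
  have unique: "g (t, h) = HL (t, h)"
    if g: "viscosity_solution g" "\<forall>h\<ge>0. g (0, h) = psi P h" "lipschitz_in_h g" and "t \<ge> 0" "h \<ge> 0"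
    for g t h
  proof -
    obtain Lg where Lg: "\<And>t h h'. t \<ge> 0 \<Longrightarrow> h \<ge> 0 \<Longrightarrow> h' \<ge> 0 \<Longrightarrow>
        \<bar>g (t, h) - g (t, h')\<bar> \<le> Lg * \<bar>h - h'\<bar>"
      using g(3) unfolding lipschitz_in_h_def by blast
    have "g (t, h) \<le> HL (t, h)"
      by (rule comparison_principle[OF _ hopf_lax_supersolution Lg hopf_lax_lipschitz])
        (use g that in \<open>auto simp: viscosity_solution_def hopf_lax_initial\<close>)
    moreover have "HL (t, h) \<le> g (t, h)"
      by (rule comparison_principle[OF hopf_lax_subsolution _ hopf_lax_lipschitz Lg])
        (use g that in \<open>auto simp: viscosity_solution_def hopf_lax_initial\<close>)
    ultimately show ?thesis by simp
  qed
  have "viscosity_solution HL"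
    unfolding viscosity_solution_def using hopf_lax_subsolution hopf_lax_supersolution by blast
  moreover have "lipschitz_in_h HL"
    unfolding lipschitz_in_h_def using hopf_lax_lipschitz by blast
  ultimately show ?thesis
    unfolding hopf_lax_eq_formula using unique hopf_lax_initial by blast
qed

end
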